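(* In the construction described in the context, let $\Omega\subsetneq P_\infty$ be any nonempty open set, $\ell:\Omega\to\mathbb{R}$ bounded continuous with $\inf_\Omega\ell>0$, and $g:\partial\Omega\to\mathbb{R}$ continuous such that $(\ell,g)$ satisfies (CC). Then there is no continuous $u:\overline\Omega\to\mathbb{R}$ with $s[u](x)=\ell(x)$ for all $x\in\Omega$ and $u=g$ on $\partial\Omega$.
   Context: Construction. Let $(e_n)$ be the canonical basis of $\ell^1(\mathbb{N})$; $\alpha(t)=t$ on $[0,\frac12]$, $\alpha(t)=1-t$ on $[\frac12,1]$; $S_n=\{te_1+\alpha(t)e_{n+1}:t\in[0,1]\}$; $x_n=(\frac12-\frac1{2^n})e_1$, $x_\infty=\frac12e_1$; $Y=\bigcup_{n\ge1}(2^{-(n+1)}S_n+x_n)\cup\{x_\infty\}$ with the $\ell^1$ metric $\theta$. $Y$ is the image of an arc-length parametrized injective curve $\gamma:[0,1]\to Y$ with $\gamma(0)=0$, $\gamma(1)=x_\infty$. For $r>0$ let $\theta_r(s,t)=r\,\theta(\gamma(s/r),\gamma(t/r))$ on $[0,r]$. Set $P_1=[0,1]$, $\rho_1=\theta_1$, $L_1=\{1\}$. Given $(P_k,\rho_k)$ with $P_k\subset[0,1]^k$ and $L_k\subset P_k$, let $\pi_k$ denote the $k$-th coordinate, choose a countable dense subset $Q_k=\{q_n:n\in\mathbb{N}\}$ (distinct $q_n$) of $P_k\setminus L_k$ with $\pi_k$ injective on $Q_k$ and $0\notin\pi_k(Q_k)$, set $r_n=2^{-(n+k)}$, $d_n=\theta_{r_n}$,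 and let $P_{k+1}=\{(x,0):x\in P_k\setminus Q_k\}\cup\{(q_n,y):n\in\mathbb{N},y\in[0,r_n]\}\subset[0,1]^{k+1}$ with metric $\rho_{k+1}((x_1,y_1),(x_2,y_2))$ equal to $d_n(y_1,y_2)$ if $x_1=x_2=q_n$; $d_n(y_1,0)+\rho_k(x_1,x_2)+d_m(0,y_2)$ if $x_1=q_n,x_2=q_m$, $n\ne m$; $d_n(y_1,0)+\rho_k(x_1,x_2)$ if $x_1=q_n$, $x_2\notin Q_k$ (and symmetrically); $\rho_k(x_1,x_2)$ if $x_1,x_2\notin Q_k$. Let $L_{k+1}=(L_k\times\{0\})\cup\{(q_n,r_n):n\in\mathbb{N}\}$. Let $i_k:P_k\to[0,1]^{\mathbb{N}}$, $i_k(x)=(x_1,\dots,x_k,0,0,\dots)$; $\mathcal P_\infty=\bigcup_k i_k(P_k)$ with the metric $\rho_\infty(x,y)=\rho_k(i_k^{-1}x,i_k^{-1}y)$ for $x,y\in i_k(P_k)$; $(P_\infty,\rho_\infty)$ is the completion of $(\mathcal P_\infty,\rho_\infty)$. Local slope: $s[u](\bar x):=\limsup_{x\to\bar x}\frac{\max\{u(\bar x)-u(x),0\}}{\rho_\infty(\bar x,x)}$ (zero if $\bar x$ isolated), computed in $\overline\Omega$. $(\ell,g)$ satisfies (CC) if for all $x,y\in\partial\Omega$, $g(x)-g(y)\le\inf\{\int_0^T\ell(\eta(t))dt\}$ over $1$-Lipschitz $\eta:[0,T]\to\overline\Omega$ with $\eta(0)=y$, $\eta(T)=x$, $\eta((0,T))\subset\Omega$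 ($\inf\emptyset=+\infty$). *)

theory Defs
  imports "HOL-Analysis.Analysis"
begin

text \<open>Points of l^1(N) are represented as functions nat => real; index i stands for
  the basis vector e_i (index 0 is unused and always 0). All points used are finitely
  supported, so the l^1 sum converges.\<close>

definition ebasis :: "nat \<Rightarrow> (nat \<Rightarrow> real)" where
  "ebasis i = (\<lambda>j. if j = i then 1 else 0)"

definition l1dist :: "(nat \<Rightarrow> real) \<Rightarrow> (nat \<Rightarrow> real) \<Rightarrow> real" where
  "l1dist a b = (\<Sum>i. \<bar>a i - b i\<bar>)"

definition alpha :: "real \<Rightarrow> real" where
  "alpha t = (if t \<le> 1/2 then t else 1 - t)"

definition Sseg :: "nat \<Rightarrow> (nat \<Rightarrow> real) set" where
  "Sseg n = {(\<lambda>i. t * ebasis 1 i + alpha t * ebasis (n+1) i) | t. t \<in> {0..1}}"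

definition xpt :: "nat \<Rightarrow> (nat \<Rightarrow> real)" where
  "xpt n = (\<lambda>i. (1/2 - 1/2^n) * ebasis 1 i)"

definition xinf :: "nat \<Rightarrow> real" where
  "xinf = (\<lambda>i. (1/2) * ebasis 1 i)"

definition Ycurve :: "(nat \<Rightarrow> real) set" where
  "Ycurve = (\<Union>n\<in>{1..}. (\<lambda>p. (\<lambda>i. (1/2)^(n+1) * p i + xpt n i)) ` Sseg n) \<union> {xinf}"

text \<open>The arc-length parametrisation gamma : [0,1] -> Y with gamma 0 = 0, gamma 1 = xinf,
  written explicitly: the n-th scaled segment (of length 2^-n) is traversed on the
  parameter interval [1 - 2/2^n, 1 - 1/2^n].\<close>

definition gamma :: "real \<Rightarrow> (nat \<Rightarrow> real)" where
  "gamma s = (if s \<ge> 1 then xinf else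
     (let n = (LEAST n::nat. s < 1 - 1/2^n);
          t = 2^n * (s - (1 - 2/2^n))
      in (\<lambda>i. xpt n i + (1/2)^(n+1) * (t * ebasis 1 i + alpha t * ebasis (n+1) i))))"

definition theta_r :: "real \<Rightarrow> real \<Rightarrow> real \<Rightarrow> real" where
  "theta_r r s t = r * l1dist (gamma (s / r)) (gamma (t / r))"

text \<open>Points of [0,1]^k are represented via the embedding i_k as functions nat => real,
  with coordinate number j (1-based) stored at index j-1, and all indices >= k equal to 0.
  q k n (n >= 1) is the n-th point of the chosen dense set Q_k.\<close>

definition rad :: "nat \<Rightarrow> nat \<Rightarrow> real" where
  "rad k n = (1/2)^(n+k)"

definition construction ::
  "(nat \<Rightarrow> (nat \<Rightarrow> real) set) \<Rightarrow> (nat \<Rightarrow> (nat \<Rightarrow> real) \<Rightarrow> (nat \<Rightarrow> real) \<Rightarrow> real)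
   \<Rightarrow> (nat \<Rightarrow> (nat \<Rightarrow> real) set) \<Rightarrow> (nat \<Rightarrow> nat \<Rightarrow> (nat \<Rightarrow> real)) \<Rightarrow> bool" where
  "construction P \<rho> L q \<longleftrightarrow>
     P 1 = {p. p 0 \<in> {0..1} \<and> (\<forall>i\<ge>1. p i = 0)} \<and>
     (\<forall>x\<in>P 1. \<forall>y\<in>P 1. \<rho> 1 x y = theta_r 1 (x 0) (y 0)) \<and>
     L 1 = {(\<lambda>i. if i = 0 then 1 else 0)} \<and>
     (\<forall>k\<ge>1.
        inj_on (q k) {1::nat..} \<and>
        q k ` {1::nat..} \<subseteq> P k - L k \<and>
        (\<forall>x\<in>P k - L k. \<forall>\<epsilon>>0. \<exists>n\<ge>1. \<rho> k x (q k n) < \<epsilon>) \<and>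
        inj_on (\<lambda>p. p (k - 1)) (q k ` {1::nat..}) \<and>
        (\<forall>n\<ge>1. q k n (k - 1) \<noteq> 0) \<and>
        P (Suc k) = (P k - q k ` {1::nat..}) \<union>
                    {(q k n)(k := y) | n y. n \<ge> 1 \<and> y \<in> {0..rad k n}} \<and>
        (\<forall>n\<ge>1. \<forall>m\<ge>1. \<forall>y1\<in>{0..rad k n}. \<forall>y2\<in>{0..rad k m}.
            \<rho> (Suc k) ((q k n)(k := y1)) ((q k m)(k := y2)) =
              (if n = m then theta_r (rad k n) y1 y2
               else theta_r (rad k n) y1 0 + \<rho> k (q k n) (q k m) + theta_r (rad k m) 0 y2)) \<and>
        (\<forall>n\<ge>1. \<forall>y1\<in>{0..rad k n}. \<forall>x\<in>P k - q k ` {1::nat..}.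
            \<rho> (Suc k) ((q k n)(k := y1)) x = theta_r (rad k n) y1 0 + \<rho> k (q k n) x \<and>
            \<rho> (Suc k) x ((q k n)(k := y1)) = \<rho> k x (q k n) + theta_r (rad k n) 0 y1) \<and>
        (\<forall>x1\<in>P k - q k ` {1::nat..}. \<forall>x2\<in>P k - q k ` {1::nat..}.
            \<rho> (Suc k) x1 x2 = \<rho> k x1 x2) \<and>
        L (Suc k) = L k \<union> {(q k n)(k := rad k n) | n. n \<ge> 1})"

definition local_slope :: "'a::metric_space set \<Rightarrow> ('a \<Rightarrow> real) \<Rightarrow> 'a \<Rightarrow> ereal" where
  "local_slope S u xb =
     (if at xb within S = bot then 0
      else Limsup (at xb within S) (\<lambda>x. ereal (max (u xb - u x) 0 / dist xb x)))"

definition compat_CC :: "'a::metric_space set \<Rightarrow> ('a \<Rightarrow> real) \<Rightarrow> ('a \<Rightarrow> real) \<Rightarrow> bool" where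
  "compat_CC \<Omega> l g \<longleftrightarrow>
     (\<forall>x\<in>frontier \<Omega>. \<forall>y\<in>frontier \<Omega>.
        ereal (g x - g y) \<le>
          Inf {ereal (integral {0..T} (\<lambda>t. l (\<eta> t))) | (T::real) (\<eta>::real \<Rightarrow> 'a).
                 T \<ge> 0 \<and> 1-lipschitz_on {0..T} \<eta> \<and> \<eta> ` {0..T} \<subseteq> closure \<Omega> \<and>
                 \<eta> 0 = y \<and> \<eta> T = x \<and> \<eta> ` {0<..<T} \<subseteq> \<Omega>})"

end

theory Submission
  imports Defs
begin

text \<open>Close to every point, \<open>P\<^sub>\<infinity>\<close> contains spikes: segments isometric to
  \<open>([0,r], theta_r r)\<close> attached at some level of the construction, and their tips are dense.
  Along a spike, Ekeland's principle applied to the closure of everything beyond a point shows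
  that \<open>u\<close> increases at a rate \<open>lam\<close>, for any \<open>lam < inf l\<close>, per unit of \<open>theta_r\<close>-length.
  Since \<open>theta_r\<close> comes from the zig-zag curve \<open>gamma\<close>, whose distance to its endpoint is only
  half the remaining arc length, the slope of \<open>u\<close> at the tip is at least \<open>2 lam\<close>. A tip where
  \<open>l < 2 inf l\<close> gives the contradiction.\<close>

section \<open>Ekeland's principle and local slopes\<close>

definition ekeland_set :: "'a::metric_space set \<Rightarrow> ('a \<Rightarrow> real) \<Rightarrow> real \<Rightarrow> 'a \<Rightarrow> 'a set" where
  "ekeland_set F \<phi> L x = {y\<in>F. \<phi> y + L * dist x y \<le> \<phi> x}"

lemma ekeland_set_refl: "x \<in> F \<Longrightarrow> x \<in> ekeland_set F \<phi> L x"
  by (simp add: ekeland_set_def)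

lemma ekeland_set_trans:
  assumes "L \<ge> 0" "y \<in> ekeland_set F \<phi> L x" "z \<in> ekeland_set F \<phi> L y"
  shows "z \<in> ekeland_set F \<phi> L x"
proof -
  have "L * dist x z \<le> L * (dist x y + dist y z)"
    using assms(1) dist_triangle[of x z y] by (rule mult_left_mono[rotated])
  hence "L * dist x z \<le> L * dist x y + L * dist y z" by (simp add: distrib_left)
  thus ?thesis using assms(2,3) by (auto simp: ekeland_set_def)
qed

lemma closed_ekeland_set:
  assumes "closed F" "continuous_on F \<phi>"
  shows "closed (ekeland_set F \<phi> L x)"
proof -
  have "continuous_on F (\<lambda>y. \<phi> y + L * dist x y - \<phi> x)"
    by (intro continuous_intros assms(2))
  hence "closed (F \<inter> (\<lambda>y. \<phi> y + L * dist x y - \<phi> x) -` {..0})"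
    by (intro continuous_closed_preimage assms(1)) auto
  moreover have "F \<inter> (\<lambda>y. \<phi> y + L * dist x y - \<phi> x) -` {..0} = ekeland_set F \<phi> L x"
    by (auto simp: ekeland_set_def)
  ultimately show ?thesis by simp
qed

lemma Cauchy_if_dist_controlled:
  fixes f :: "nat \<Rightarrow> 'a::metric_space"
  assumes L: "L > 0" and conv: "convergent (\<lambda>n. \<phi> n :: real)"
    and ctrl: "\<And>n m. n \<le> m \<Longrightarrow> L * dist (f n) (f m) \<le> \<phi> n - \<phi> m"
  shows "Cauchy f"
proof (rule metric_CauchyI)
  fix e :: real assume e: "e > 0"
  obtain M where M: "\<forall>m\<ge>M. \<forall>n\<ge>M. dist (\<phi> m) (\<phi> n) < L * e"
    using metric_CauchyD[OF convergent_Cauchy[OF conv]] e L by (meson mult_pos_pos)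
  have less: "dist (f n) (f m) < e" if "n \<le> m" "n \<ge> M" for n m
  proof -
    have "\<bar>\<phi> m - \<phi> n\<bar> < L * e" using M[rule_format, of m n] that by (simp add: dist_real_def)
    hence "L * dist (f n) (f m) < L * e" using ctrl[OF that(1)] by linarith
    thus ?thesis using L by simp
  qed
  have "dist (f m) (f n) < e" if "m \<ge> M" "n \<ge> M" for m n
    using less[of m n] less[of n m] that by (cases "m \<le> n") (auto simp: dist_commute)
  thus "\<exists>M. \<forall>m\<ge>M. \<forall>n\<ge>M. dist (f m) (f n) < e" by blast
qed

lemma ekeland_sequence:
  fixes \<phi> :: "'a::metric_space \<Rightarrow> real"
  assumes x0: "x0 \<in> F" and lb: "\<And>x. x \<in> F \<Longrightarrow> \<phi> x \<ge> m" and L: "L \<ge> 0"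
  obtains f where "f 0 = x0" "\<And>n. f n \<in> F"
    "\<And>n m. n \<le> m \<Longrightarrow> f m \<in> ekeland_set F \<phi> L (f n)"
    "\<And>n. \<phi> (f (Suc n)) \<le> (INF z\<in>ekeland_set F \<phi> L (f n). \<phi> z) + 1 / real (Suc n)"
proof -
  let ?S = "ekeland_set F \<phi> L"
  have SF: "?S x \<subseteq> F" for x by (auto simp: ekeland_set_def)
  have bdd: "bdd_below (\<phi> ` ?S x)" for x using lb SF by (meson bdd_belowI2 subsetD)
  define nxt where "nxt n x = (SOME y. y \<in> ?S x \<and> \<phi> y \<le> (INF z\<in>?S x. \<phi> z) + 1 / real (Suc n))"
    for n x
  have nxt: "nxt n x \<in> ?S x \<and> \<phi> (nxt n x) \<le> (INF z\<in>?S x. \<phi> z) + 1 / real (Suc n)"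
    if "x \<in> F" for n x
  proof -
    have ne: "?S x \<noteq> {}" using ekeland_set_refl[OF that] by auto
    have "(INF z\<in>?S x. \<phi> z) < (INF z\<in>?S x. \<phi> z) + 1 / real (Suc n)" by simp
    then obtain y where "y \<in> ?S x" "\<phi> y < (INF z\<in>?S x. \<phi> z) + 1 / real (Suc n)"
      using cINF_less_iff[OF ne bdd] by blast
    hence "\<exists>y. y \<in> ?S x \<and> \<phi> y \<le> (INF z\<in>?S x. \<phi> z) + 1 / real (Suc n)" by auto
    thus ?thesis unfolding nxt_def by (rule someI_ex)
  qed
  define f where "f = rec_nat x0 nxt"
  have f0: "f 0 = x0" and fSuc: "f (Suc n) = nxt n (f n)" for n by (simp_all add: f_def)
  have fF: "f n \<in> F" for n
    by (induction n) (use x0 nxt SF in \<open>auto simp: f0 fSuc\<close>)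
  have "f m \<in> ?S (f n)" if "n \<le> m" for n m
    using that
  proof (induction m rule: dec_induct)
    case base show ?case using ekeland_set_refl fF by blast
  next
    case (step m)
    have "f (Suc m) \<in> ?S (f m)" using nxt[OF fF] fSuc by simp
    thus ?case using ekeland_set_trans[OF L step.IH] by simp
  qed
  moreover have "\<phi> (f (Suc n)) \<le> (INF z\<in>?S (f n). \<phi> z) + 1 / real (Suc n)" for n
    using nxt[OF fF] fSuc by simp
  ultimately show thesis using that f0 fF by blast
qed

lemma ekeland_sequence_convergent:
  fixes f :: "nat \<Rightarrow> 'a::complete_space"
  assumes L: "L > 0" and lb: "\<And>x. x \<in> F \<Longrightarrow> \<phi> x \<ge> m" and fF: "\<And>n. f n \<in> F"
    and nested: "\<And>n m. n \<le> m \<Longrightarrow> f m \<in> ekeland_set F \<phi> L (f n)"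
  obtains w where "f \<longlonglongrightarrow> w"
proof -
  have ctrl: "L * dist (f n) (f m) \<le> \<phi> (f n) - \<phi> (f m)" if "n \<le> m" for n m
    using nested[OF that] by (simp add: ekeland_set_def)
  have dec: "decseq (\<lambda>n. \<phi> (f n))"
  proof (rule decseq_SucI)
    fix n
    have "0 \<le> L * dist (f n) (f (Suc n))" using L by simp
    thus "\<phi> (f (Suc n)) \<le> \<phi> (f n)" using ctrl[of n "Suc n"] by simp
  qed
  have "convergent (\<lambda>n. \<phi> (f n))"
  proof (rule Bseq_monoseq_convergent)
    show "monoseq (\<lambda>n. \<phi> (f n))" using dec by (simp add: monoseq_iff)
    show "Bseq (\<lambda>n. \<phi> (f n))"
    proof (rule BseqI'[where K = "max \<bar>\<phi> (f 0)\<bar> \<bar>m\<bar>"])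
      fix n
      have "\<phi> (f n) \<le> \<phi> (f 0)" using dec by (metis decseqD zero_le)
      thus "norm (\<phi> (f n)) \<le> max \<bar>\<phi> (f 0)\<bar> \<bar>m\<bar>" using lb[OF fF, of n] by auto
    qed
  qed
  hence "Cauchy f" by (rule Cauchy_if_dist_controlled[OF L _ ctrl])
  thus thesis using that by (auto simp: Cauchy_convergent_iff convergent_def)
qed

lemma ekeland_variational_principle:
  fixes F :: "'a::complete_space set" and \<phi> :: "'a \<Rightarrow> real"
  assumes clF: "closed F" and x0: "x0 \<in> F" and cont: "continuous_on F \<phi>"
    and lb: "\<And>x. x \<in> F \<Longrightarrow> \<phi> x \<ge> m" and L: "L > 0"
  shows "\<exists>w\<in>F. \<phi> w + L * dist x0 w \<le> \<phi> x0 \<and> (\<forall>x\<in>F. \<phi> w \<le> \<phi> x + L * dist w x)"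
proof -
  let ?S = "ekeland_set F \<phi> L"
  have Ldist: "0 \<le> L * dist a b" for a b using L by simp
  obtain f where f0: "f 0 = x0" and fF: "\<And>n. f n \<in> F"
    and nested: "\<And>n m. n \<le> m \<Longrightarrow> f m \<in> ?S (f n)"
    and almost_min: "\<And>n. \<phi> (f (Suc n)) \<le> (INF z\<in>?S (f n). \<phi> z) + 1 / real (Suc n)"
    using ekeland_sequence[where \<phi> = \<phi>, OF x0 lb less_imp_le[OF L]] by blast
  obtain w where fw: "f \<longlonglongrightarrow> w" using ekeland_sequence_convergent[OF L lb fF nested] .
  have wS: "w \<in> ?S (f n)" for n
  proof -
    have "f (i + n) \<in> ?S (f n)" for i using nested by simp
    from closed_sequentially[OF closed_ekeland_set[OF clF cont] this
        LIMSEQ_ignore_initial_segment[OF fw, of n]]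
    show ?thesis .
  qed
  have "\<phi> w \<le> \<phi> x + L * dist w x" if xF: "x \<in> F" for x
  proof (rule ccontr)
    assume nt: "\<not> \<phi> w \<le> \<phi> x + L * dist w x"
    hence xS: "x \<in> ?S w" using xF by (auto simp: ekeland_set_def)
    have approx: "\<phi> w \<le> \<phi> x + 1 / real (Suc n)" for n
    proof -
      have "\<phi> w + L * dist (f (Suc n)) w \<le> \<phi> (f (Suc n))"
        using wS[of "Suc n"] by (simp add: ekeland_set_def)
      hence "\<phi> w \<le> \<phi> (f (Suc n))" using Ldist[of "f (Suc n)" w] by linarith
      also have "\<dots> \<le> (INF z\<in>?S (f n). \<phi> z) + 1 / real (Suc n)" by (rule almost_min)
      also have "(INF z\<in>?S (f n). \<phi> z) \<le> \<phi> x"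
      proof (rule cINF_lower)
        show "bdd_below (\<phi> ` ?S (f n))"
          using lb by (intro bdd_belowI2[where m = m]) (simp add: ekeland_set_def)
        show "x \<in> ?S (f n)" using ekeland_set_trans[OF _ wS xS] L by simp
      qed
      finally show ?thesis by simp
    qed
    have "\<phi> w \<le> \<phi> x"
    proof (rule ccontr)
      assume "\<not> \<phi> w \<le> \<phi> x"
      then obtain n where "inverse (real (Suc n)) < \<phi> w - \<phi> x"
        using reals_Archimedean[of "\<phi> w - \<phi> x"] by auto
      thus False using approx[of n] by (simp add: inverse_eq_divide)
    qed
    moreover have "\<phi> x + L * dist w x \<le> \<phi> w" using xS by (simp add: ekeland_set_def)
    ultimately have "L * dist w x \<le> 0" by linarith
    hence "x = w" using L by (simp add: mult_le_0_iff)
    thus False using nt by simp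
  qed
  moreover have "\<phi> w + L * dist x0 w \<le> \<phi> x0" using wS[of 0] f0 by (simp add: ekeland_set_def)
  moreover have "w \<in> F" using wS[of 0] by (simp add: ekeland_set_def)
  ultimately show ?thesis by blast
qed

lemma Limsup_mono_filter:
  assumes "F \<le> G"
  shows "Limsup F f \<le> Limsup G f"
  unfolding Limsup_def by (rule INF_superset_mono) (auto intro: filter_leD[OF assms])

lemma local_slope_le:
  fixes u :: "'a::metric_space \<Rightarrow> real"
  assumes e: "e > 0" and L0: "L \<ge> 0"
    and lip: "\<And>x. x \<in> S \<Longrightarrow> x \<noteq> w \<Longrightarrow> dist x w < e \<Longrightarrow> u w \<le> u x + L * dist w x"
  shows "local_slope S u w \<le> ereal L"
proof -
  have "eventually (\<lambda>x. ereal (max (u w - u x) 0 / dist w x) \<le> ereal L) (at w within S)"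
    unfolding eventually_at
  proof (intro exI[of _ e] conjI ballI impI)
    fix x assume x: "x \<in> S" "x \<noteq> w \<and> dist x w < e"
    have "max (u w - u x) 0 \<le> L * dist w x" using lip[of x] x L0 by auto
    thus "ereal (max (u w - u x) 0 / dist w x) \<le> ereal L"
      using x L0 by (simp add: divide_le_eq dist_commute)
  qed (fact e)
  thus ?thesis using L0 by (simp add: local_slope_def Limsup_bounded)
qed

lemma local_slope_ge:
  fixes u :: "'a::metric_space \<Rightarrow> real"
  assumes lim: "X \<longlonglongrightarrow> p" and XS: "\<And>n. X n \<in> S" and Xp: "\<And>n. X n \<noteq> p"
    and decay: "\<And>n. \<beta> * dist p (X n) \<le> u p - u (X n)"
  shows "ereal \<beta> \<le> local_slope S u p"
proof -
  let ?q = "\<lambda>x. ereal (max (u p - u x) 0 / dist p x)"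
  have fl: "filterlim X (at p within S) sequentially"
    using lim XS Xp by (intro filterlim_at_withinI) auto
  hence nontriv: "at p within S \<noteq> bot"
    by (metis filterlim_def filtermap_bot_iff trivial_limit_sequentially bot.extremum_unique)
  have "ereal \<beta> \<le> Limsup sequentially (\<lambda>n. ?q (X n))"
  proof (rule le_Limsup)
    have "ereal \<beta> \<le> ?q (X n)" for n
    proof -
      have "dist p (X n) > 0" using Xp[of n] by simp
      thus ?thesis using decay[of n] by (simp add: le_divide_eq)
    qed
    thus "\<forall>\<^sub>F n in sequentially. ereal \<beta> \<le> ?q (X n)" by simp
  qed simp
  also have "\<dots> \<le> Limsup (filtermap X sequentially) ?q" by (rule Limsup_filtermap_ge)
  also have "\<dots> \<le> Limsup (at p within S) ?q"
    using fl unfolding filterlim_def by (rule Limsup_mono_filter)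
  finally show ?thesis using nontriv by (simp add: local_slope_def)
qed

section \<open>The curve \<open>gamma\<close> and the metrics \<open>theta_r\<close>\<close>

lemma l1dist_finite_support:
  assumes "finite N" "\<And>i. i \<notin> N \<Longrightarrow> a i = b i"
  shows "l1dist a b = (\<Sum>i\<in>N. \<bar>a i - b i\<bar>)"
  unfolding l1dist_def using assms by (intro suminf_finite) auto

lemma l1dist_commute: "l1dist a b = l1dist b a"
  unfolding l1dist_def by (simp add: abs_minus_commute)

lemma l1dist_two_axes:
  assumes "i \<noteq> 1" "j \<noteq> 1"
  shows "l1dist (\<lambda>k. x * ebasis 1 k + a * ebasis i k) (\<lambda>k. y * ebasis 1 k + b * ebasis j k)
       = \<bar>x - y\<bar> + (if i = j then \<bar>a - b\<bar> else \<bar>a\<bar> + \<bar>b\<bar>)"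
proof -
  have "l1dist (\<lambda>k. x * ebasis 1 k + a * ebasis i k) (\<lambda>k. y * ebasis 1 k + b * ebasis j k)
      = (\<Sum>k\<in>{1,i,j}. \<bar>(x * ebasis 1 k + a * ebasis i k) - (y * ebasis 1 k + b * ebasis j k)\<bar>)"
    by (rule l1dist_finite_support) (auto simp: ebasis_def)
  also have "\<dots> = \<bar>x - y\<bar> + (if i = j then \<bar>a - b\<bar> else \<bar>a\<bar> + \<bar>b\<bar>)"
    using assms by (cases "i = j") (auto simp: ebasis_def)
  finally show ?thesis .
qed

definition gamma_piece :: "real \<Rightarrow> nat" where
  "gamma_piece s = (LEAST n::nat. s < 1 - 1/2^n)"

lemma gamma_piece_bounds:
  assumes "0 \<le> s" "s < 1"
  shows "gamma_piece s \<ge> 1" "1 - 2/2^(gamma_piece s) \<le> s" "s < 1 - 1/2^(gamma_piece s)"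
proof -
  obtain n :: nat where "(1/2::real)^n < 1 - s"
    using assms real_arch_pow_inv[of "1 - s" "1/2"] by auto
  hence "s < 1 - 1/2^n" by (simp add: power_divide)
  hence ex: "\<exists>n::nat. s < 1 - 1/2^n" by blast
  show upper: "s < 1 - 1/2^(gamma_piece s)" unfolding gamma_piece_def by (rule LeastI_ex[OF ex])
  show "gamma_piece s \<ge> 1"
    using upper assms by (cases "gamma_piece s") auto
  then obtain M where M: "gamma_piece s = Suc M" by (cases "gamma_piece s") auto
  have "\<not> s < 1 - 1/2^M"
    using M not_less_Least[of M "\<lambda>n. s < 1 - 1/2^n"] by (simp add: gamma_piece_def)
  thus "1 - 2/2^(gamma_piece s) \<le> s" using M by simp
qed

lemma two_div_pow_le_div_pow:
  assumes "a < b"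
  shows "(2::real)/2^b \<le> 1/2^a"
proof -
  have "(2::real)^(Suc a) \<le> 2^b" using assms by (intro power_increasing) auto
  hence "2/2^b \<le> (2::real)/2^(Suc a)" by (intro divide_left_mono) auto
  thus ?thesis by simp
qed

lemma gamma_piece_eqI:
  assumes "N \<ge> 1" "1 - 2/2^N \<le> s" "s < 1 - 1/2^N"
  shows "gamma_piece s = N"
  unfolding gamma_piece_def
proof (rule Least_equality)
  show "s < 1 - 1/2^N" by fact
  fix m :: nat assume m: "s < 1 - 1/2^m"
  show "N \<le> m"
    using two_div_pow_le_div_pow[of m N] m assms(2) by (cases "m < N") auto
qed

lemma gamma_piece_mono:
  assumes "0 \<le> t" "t \<le> s" "s < 1"
  shows "gamma_piece t \<le> gamma_piece s"
  unfolding gamma_piece_def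
  by (rule Least_le) (use gamma_piece_bounds(3)[of s] assms in \<open>auto simp: gamma_piece_def\<close>)

definition piece_param :: "real \<Rightarrow> real" where
  "piece_param s = 2^gamma_piece s * (s - (1 - 2/2^gamma_piece s))"

definition gamma_bump :: "real \<Rightarrow> real" where
  "gamma_bump s = (if s \<ge> 1 then 0 else (1/2)^(gamma_piece s + 1) * alpha (piece_param s))"

definition gamma_axis :: "real \<Rightarrow> nat" where
  "gamma_axis s = (if s < 1 then gamma_piece s + 1 else 2)"

text \<open>On its \<open>n\<close>-th piece, \<open>gamma\<close> moves by \<open>s/2\<close> along \<open>e\<^sub>1\<close> and carries a tent of height
  \<open>(1/2)^(n+2)\<close> along \<open>e\<^sub>n\<^sub>+\<^sub>1\<close> (index \<open>gamma_axis s\<close>). At \<open>s = 1\<close> the bump vanishes and the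
  axis \<open>2\<close> is an arbitrary choice.\<close>

lemma gamma_eq:
  assumes "0 \<le> s" "s \<le> 1"
  shows "gamma s = (\<lambda>k. (s/2) * ebasis 1 k + gamma_bump s * ebasis (gamma_axis s) k)"
proof (cases "s < 1")
  case True
  let ?n = "gamma_piece s"
  have N: "?n \<ge> 1" using gamma_piece_bounds[OF assms(1) True] by simp
  have pw: "(1/2::real)^(?n + 1) * 2^?n = 1/2"
    by (simp add: power_divide field_simps)
  show ?thesis
  proof
    fix k
    have "gamma s k = xpt ?n k + (1/2)^(?n + 1) * (piece_param s * ebasis 1 k
          + alpha (piece_param s) * ebasis (?n + 1) k)"
      using True by (simp add: gamma_def gamma_piece_def piece_param_def Let_def)
    also have "\<dots> = (s/2) * ebasis 1 k + gamma_bump s * ebasis (gamma_axis s) k"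
      using True N pw
      by (cases "k = 1"; cases "k = ?n + 1")
         (auto simp: xpt_def ebasis_def gamma_bump_def gamma_axis_def piece_param_def field_simps)
    finally show "gamma s k = (s/2) * ebasis 1 k + gamma_bump s * ebasis (gamma_axis s) k" .
  qed
next
  case False
  hence "s = 1" using assms by simp
  thus ?thesis by (auto simp: gamma_def xinf_def gamma_bump_def ebasis_def)
qed

lemma alpha_bounds: "0 \<le> t \<Longrightarrow> t \<le> 1 \<Longrightarrow> 0 \<le> alpha t \<and> alpha t \<le> t \<and> alpha t \<le> 1 - t"
  by (auto simp: alpha_def)

lemma alpha_lipschitz: "\<bar>alpha x - alpha y\<bar> \<le> \<bar>x - y\<bar>"
  by (auto simp: alpha_def)

lemma piece_param_bounds:
  assumes "0 \<le> s" "s < 1"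
  shows "0 \<le> piece_param s" "piece_param s < 1"
proof -
  let ?n = "gamma_piece s"
  note b = gamma_piece_bounds[OF assms]
  show "0 \<le> piece_param s" using b(2) by (simp add: piece_param_def)
  have "2^?n * (s - (1 - 2/2^?n)) < 2^?n * ((1::real)/2^?n)"
    using b(3) by (intro mult_strict_left_mono) auto
  thus "piece_param s < 1" by (simp add: piece_param_def)
qed

lemma piece_param_scaled: "(1/2::real)^(gamma_piece s + 1) * piece_param s = (s - (1 - 2/2^gamma_piece s))/2"
  unfolding piece_param_def by (simp add: power_divide field_simps)

lemma gamma_bump_eq: "s < 1 \<Longrightarrow> gamma_bump s = (1/2)^(gamma_piece s + 1) * alpha (piece_param s)"
  by (simp add: gamma_bump_def)

lemma gamma_bump_nonneg:
  assumes "0 \<le> s"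
  shows "0 \<le> gamma_bump s"
proof (cases "s < 1")
  case True
  hence "0 \<le> alpha (piece_param s)"
    using alpha_bounds piece_param_bounds[OF assms] by (simp add: less_imp_le)
  thus ?thesis using True by (simp add: gamma_bump_eq)
qed (simp add: gamma_bump_def)

lemma gamma_bump_le:
  assumes "0 \<le> s" "s < 1"
  shows "gamma_bump s \<le> (s - (1 - 2/2^gamma_piece s))/2"
    "gamma_bump s \<le> ((1 - 1/2^gamma_piece s) - s)/2"
proof -
  let ?c = "(1/2::real)^(gamma_piece s + 1)"
  note a = alpha_bounds[OF piece_param_bounds(1)[OF assms] less_imp_le[OF piece_param_bounds(2)[OF assms]]]
  have "gamma_bump s \<le> ?c * piece_param s"
    using assms a by (simp add: gamma_bump_def)
  thus "gamma_bump s \<le> (s - (1 - 2/2^gamma_piece s))/2" by (simp only: piece_param_scaled)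
  have "gamma_bump s \<le> ?c * (1 - piece_param s)"
    using assms a by (simp add: gamma_bump_def)
  also have "\<dots> = ((1 - 1/2^gamma_piece s) - s)/2"
    using piece_param_scaled[of s] by (simp add: right_diff_distrib power_divide field_simps)
  finally show "gamma_bump s \<le> ((1 - 1/2^gamma_piece s) - s)/2" .
qed

lemma gamma_bump_lipschitz:
  assumes "s < 1" "t < 1" "gamma_piece s = gamma_piece t"
  shows "\<bar>gamma_bump s - gamma_bump t\<bar> \<le> \<bar>s - t\<bar>/2"
proof -
  let ?c = "(1/2::real)^(gamma_piece s + 1)"
  have "gamma_bump s - gamma_bump t = ?c * (alpha (piece_param s) - alpha (piece_param t))"
    using assms by (simp only: gamma_bump_eq right_diff_distrib)
  hence "\<bar>gamma_bump s - gamma_bump t\<bar> = \<bar>?c\<bar> * \<bar>alpha (piece_param s) - alpha (piece_param t)\<bar>"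
    by (simp only: abs_mult)
  also have "\<dots> = ?c * \<bar>alpha (piece_param s) - alpha (piece_param t)\<bar>" by simp
  also have "\<dots> \<le> ?c * \<bar>piece_param s - piece_param t\<bar>"
    by (intro mult_left_mono alpha_lipschitz) auto
  also have "\<dots> = \<bar>?c * piece_param s - ?c * piece_param t\<bar>"
    by (simp only: right_diff_distrib[symmetric] abs_mult abs_of_pos[OF zero_less_power])
  also have "?c * piece_param s - ?c * piece_param t = (s - t)/2"
    using piece_param_scaled[of s] piece_param_scaled[of t] unfolding assms(3) by argo
  also have "\<bar>(s - t)/2\<bar> = \<bar>s - t\<bar>/2" by simp
  finally show ?thesis .
qed

definition bump_dist :: "real \<Rightarrow> real \<Rightarrow> real" where
  "bump_dist s t = (if gamma_axis s = gamma_axis t then \<bar>gamma_bump s - gamma_bump t\<bar>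
                    else gamma_bump s + gamma_bump t)"

lemma bump_dist_commute: "bump_dist s t = bump_dist t s"
  by (auto simp: bump_dist_def abs_minus_commute)

lemma bump_dist_nonneg: "0 \<le> s \<Longrightarrow> 0 \<le> t \<Longrightarrow> 0 \<le> bump_dist s t"
  using gamma_bump_nonneg[of s] gamma_bump_nonneg[of t] by (auto simp: bump_dist_def)

lemma bump_dist_triangle:
  "0 \<le> s \<Longrightarrow> 0 \<le> t \<Longrightarrow> 0 \<le> a \<Longrightarrow> bump_dist s a \<le> bump_dist s t + bump_dist t a"
  using gamma_bump_nonneg[of s] gamma_bump_nonneg[of t] gamma_bump_nonneg[of a]
  by (auto simp: bump_dist_def)

lemma bump_dist_le:
  assumes "0 \<le> t" "t \<le> s" "s \<le> 1"
  shows "bump_dist s t \<le> (s - t)/2"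
proof (cases "s < 1")
  case True
  have t1: "t < 1" using True assms by simp
  show ?thesis
  proof (cases "gamma_piece s = gamma_piece t")
    case True
    thus ?thesis using gamma_bump_lipschitz[of s t] \<open>s < 1\<close> t1 assms
      by (auto simp: bump_dist_def gamma_axis_def)
  next
    case False
    hence lt: "gamma_piece t < gamma_piece s" using gamma_piece_mono[of t s] assms \<open>s < 1\<close> by simp
    have "bump_dist s t = gamma_bump s + gamma_bump t"
      using False \<open>s < 1\<close> t1 by (simp add: bump_dist_def gamma_axis_def)
    also have "\<dots> \<le> (s - (1 - 2/2^gamma_piece s))/2 + ((1 - 1/2^gamma_piece t) - t)/2"
      using gamma_bump_le(1)[of s] gamma_bump_le(2)[of t] assms \<open>s < 1\<close> t1 by argo
    also have "\<dots> \<le> (s - t)/2" using two_div_pow_le_div_pow[OF lt] by argo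
    finally show ?thesis .
  qed
next
  case False
  hence s1: "s = 1" using assms by simp
  show ?thesis
  proof (cases "t < 1")
    case True
    have "bump_dist s t = gamma_bump t"
      using s1 gamma_bump_nonneg[of t] assms by (auto simp: bump_dist_def gamma_bump_def)
    also have "\<dots> \<le> ((1 - 1/2^gamma_piece t) - t)/2" using gamma_bump_le(2)[of t] assms True by simp
    also have "\<dots> \<le> (s - t)/2" using s1 by simp
    finally show ?thesis .
  next
    case False
    hence "t = 1" using s1 assms by simp
    thus ?thesis using s1 by (simp add: bump_dist_def)
  qed
qed

lemma l1dist_gamma:
  assumes "0 \<le> s" "s \<le> 1" "0 \<le> t" "t \<le> 1"
  shows "l1dist (gamma s) (gamma t) = \<bar>s - t\<bar>/2 + bump_dist s t"
proof -
  have ax: "gamma_axis s \<noteq> 1" "gamma_axis t \<noteq> 1"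
    using gamma_piece_bounds(1)[of s] gamma_piece_bounds(1)[of t] assms by (auto simp: gamma_axis_def)
  have "l1dist (gamma s) (gamma t) =
      l1dist (\<lambda>k. (s/2) * ebasis 1 k + gamma_bump s * ebasis (gamma_axis s) k)
             (\<lambda>k. (t/2) * ebasis 1 k + gamma_bump t * ebasis (gamma_axis t) k)"
    using assms by (simp add: gamma_eq)
  also have "\<dots> = \<bar>s/2 - t/2\<bar> + (if gamma_axis s = gamma_axis t
      then \<bar>gamma_bump s - gamma_bump t\<bar> else \<bar>gamma_bump s\<bar> + \<bar>gamma_bump t\<bar>)"
    by (rule l1dist_two_axes[OF ax])
  also have "(if gamma_axis s = gamma_axis t
      then \<bar>gamma_bump s - gamma_bump t\<bar> else \<bar>gamma_bump s\<bar> + \<bar>gamma_bump t\<bar>) = bump_dist s t"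
    using gamma_bump_nonneg[of s] gamma_bump_nonneg[of t] assms by (simp add: bump_dist_def)
  also have "\<bar>s/2 - t/2\<bar> = \<bar>s - t\<bar>/2" by (cases "s \<le> t") auto
  finally show ?thesis .
qed

lemma l1dist_gamma_le:
  assumes "0 \<le> s" "s \<le> 1" "0 \<le> t" "t \<le> 1"
  shows "l1dist (gamma s) (gamma t) \<le> \<bar>s - t\<bar>"
proof -
  have "bump_dist s t \<le> \<bar>s - t\<bar>/2"
    using bump_dist_le[of t s] bump_dist_le[of s t] bump_dist_commute[of s t] assms
    by (cases "t \<le> s") auto
  thus ?thesis using l1dist_gamma[OF assms] by simp
qed

lemma l1dist_gamma_ge:
  assumes "0 \<le> s" "s \<le> 1" "0 \<le> t" "t \<le> 1"
  shows "\<bar>s - t\<bar>/2 \<le> l1dist (gamma s) (gamma t)"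
  using l1dist_gamma[OF assms] bump_dist_nonneg[of s t] assms by simp

lemma l1dist_gamma_mono:
  assumes "0 \<le> t" "t \<le> a" "a \<le> s" "s \<le> 1"
  shows "l1dist (gamma s) (gamma a) \<le> l1dist (gamma s) (gamma t)"
proof -
  have "bump_dist s a \<le> bump_dist s t + bump_dist t a" using bump_dist_triangle assms by simp
  moreover have "bump_dist t a \<le> (a - t)/2"
    using bump_dist_le[of t a] bump_dist_commute[of t a] assms by simp
  moreover have "l1dist (gamma s) (gamma a) = (s - a)/2 + bump_dist s a"
    using l1dist_gamma[of s a] assms by simp
  moreover have "l1dist (gamma s) (gamma t) = (s - t)/2 + bump_dist s t"
    using l1dist_gamma[of s t] assms by simp
  ultimately show ?thesis by argo
qed

text \<open>Between consecutive kinks \<open>piece_start N\<close>, \<open>piece_peak N\<close>, \<open>piece_start (Suc N)\<close> the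
  curve has speed one, but from \<open>piece_start N\<close> the endpoint is only at half the remaining
  arc length.\<close>

definition piece_start :: "nat \<Rightarrow> real" where
  "piece_start N = 1 - 2/2^N"

definition piece_peak :: "nat \<Rightarrow> real" where
  "piece_peak N = piece_start N + 1/2^(N+1)"

lemma piece_start_le_1: "piece_start N < 1"
  by (simp add: piece_start_def)

lemma piece_start_nonneg: "N \<ge> 1 \<Longrightarrow> 0 \<le> piece_start N"
  using two_div_pow_le_div_pow[of 0 N] by (simp add: piece_start_def)

lemma gamma_piece_start: "N \<ge> 1 \<Longrightarrow> gamma_piece (piece_start N) = N"
proof (rule gamma_piece_eqI)
  have "1/2^N < (2::real)/2^N" by (intro divide_strict_right_mono) auto
  thus "piece_start N < 1 - 1/2^N" by (simp add: piece_start_def)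
qed (simp_all add: piece_start_def)

lemma gamma_bump_piece_start:
  assumes "N \<ge> 1"
  shows "gamma_bump (piece_start N) = 0"
proof -
  have "piece_param (piece_start N) = 0"
    unfolding piece_param_def gamma_piece_start[OF assms] by (simp add: piece_start_def)
  thus ?thesis by (simp add: gamma_bump_eq piece_start_le_1 alpha_def)
qed

lemma piece_peak_bounds: "piece_start N < piece_peak N" "piece_peak N < piece_start (Suc N)"
  by (simp_all add: piece_peak_def piece_start_def field_simps)

lemma gamma_piece_peak:
  assumes "N \<ge> 1"
  shows "gamma_piece (piece_peak N) = N"
proof (rule gamma_piece_eqI)
  show "1 - 2/2^N \<le> piece_peak N" by (simp add: piece_peak_def piece_start_def field_simps)
  show "piece_peak N < 1 - 1/2^N" by (simp add: piece_peak_def piece_start_def field_simps)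
qed (fact assms)

lemma piece_peak_lt_1: "piece_peak N < 1"
  using piece_peak_bounds(2)[of N] piece_start_le_1[of "Suc N"] by linarith

lemma gamma_bump_piece_peak:
  assumes "N \<ge> 1"
  shows "gamma_bump (piece_peak N) = (1/2)^(N+2)"
proof -
  have "piece_param (piece_peak N) = 1/2"
    unfolding piece_param_def gamma_piece_peak[OF assms]
    by (simp add: piece_peak_def piece_start_def field_simps)
  thus ?thesis
    using gamma_piece_peak[OF assms] by (simp add: gamma_bump_eq[OF piece_peak_lt_1] alpha_def)
qed

lemma gamma_axis_piece_start: "N \<ge> 1 \<Longrightarrow> gamma_axis (piece_start N) = N + 1"
  by (simp add: gamma_axis_def piece_start_le_1 gamma_piece_start)

lemma gamma_axis_piece_peak: "N \<ge> 1 \<Longrightarrow> gamma_axis (piece_peak N) = N + 1"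
  by (simp add: gamma_axis_def piece_peak_lt_1 gamma_piece_peak)

lemma l1dist_gamma_start_peak:
  assumes "N \<ge> 1"
  shows "l1dist (gamma (piece_start N)) (gamma (piece_peak N)) = piece_peak N - piece_start N"
proof -
  have "bump_dist (piece_start N) (piece_peak N) = (1/2)^(N+2)"
    using assms by (simp add: bump_dist_def gamma_axis_piece_start gamma_axis_piece_peak
        gamma_bump_piece_start gamma_bump_piece_peak)
  moreover have "l1dist (gamma (piece_start N)) (gamma (piece_peak N))
      = \<bar>piece_start N - piece_peak N\<bar>/2 + bump_dist (piece_start N) (piece_peak N)"
    using piece_start_nonneg[OF assms] piece_peak_bounds(1)[of N] piece_peak_lt_1[of N]
    by (intro l1dist_gamma) auto
  ultimately show ?thesis
    using piece_peak_bounds(1)[of N] by (simp add: piece_peak_def power_divide)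
qed

lemma l1dist_gamma_peak_start:
  assumes "N \<ge> 1"
  shows "l1dist (gamma (piece_peak N)) (gamma (piece_start (Suc N))) = piece_start (Suc N) - piece_peak N"
proof -
  have "bump_dist (piece_peak N) (piece_start (Suc N)) = (1/2)^(N+2)"
    using assms by (simp add: bump_dist_def gamma_axis_piece_start gamma_axis_piece_peak
        gamma_bump_piece_start gamma_bump_piece_peak)
  moreover have "l1dist (gamma (piece_peak N)) (gamma (piece_start (Suc N)))
      = \<bar>piece_peak N - piece_start (Suc N)\<bar>/2 + bump_dist (piece_peak N) (piece_start (Suc N))"
    using piece_start_nonneg[OF assms] piece_peak_bounds[of N] piece_start_le_1[of "Suc N"]
    by (intro l1dist_gamma) auto
  ultimately show ?thesis
    using piece_peak_bounds(2)[of N]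
    by (simp add: piece_peak_def piece_start_def power_divide field_simps)
qed

lemma l1dist_gamma_start_end:
  assumes "N \<ge> 1"
  shows "l1dist (gamma (piece_start N)) (gamma 1) = (1 - piece_start N)/2"
proof -
  have "bump_dist (piece_start N) 1 = 0"
    using gamma_bump_piece_start[OF assms] by (simp add: bump_dist_def gamma_bump_def)
  thus ?thesis
    using l1dist_gamma[of "piece_start N" 1] piece_start_nonneg[OF assms] piece_start_le_1[of N]
    by simp
qed

lemma piece_start_mono: "N \<le> M \<Longrightarrow> piece_start N \<le> piece_start M"
  unfolding piece_start_def by (simp add: divide_left_mono power_increasing)

lemma piece_start_limit: "piece_start \<longlonglongrightarrow> 1"
proof -
  have "(\<lambda>N. 1 - 2 * (1/2::real)^N) \<longlonglongrightarrow> 1 - 2 * 0"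
    by (intro tendsto_intros LIMSEQ_power_zero) auto
  moreover have "piece_start = (\<lambda>N. 1 - 2 * (1/2::real)^N)"
    by (rule ext) (simp add: piece_start_def power_divide)
  ultimately show ?thesis by simp
qed

lemma piece_start_exceeds:
  assumes r: "r > 0" and a: "a < r"
  shows "\<exists>N\<ge>1. a \<le> r * piece_start N"
proof -
  have "eventually (\<lambda>N. a / r < piece_start N) sequentially"
    using order_tendstoD(1)[OF piece_start_limit, of "a / r"] a r by simp
  then obtain N where "\<forall>n\<ge>N. a / r < piece_start n" unfolding eventually_sequentially by blast
  hence "a / r < piece_start (max N 1)" by simp
  hence "a \<le> r * piece_start (max N 1)" using r by (simp add: field_simps)
  thus ?thesis by (intro exI[of _ "max N 1"]) simp
qed

lemma theta_r_le:
  assumes "r > 0" "0 \<le> y" "y \<le> r" "0 \<le> z" "z \<le> r"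
  shows "theta_r r y z \<le> \<bar>y - z\<bar>"
proof -
  have "r * l1dist (gamma (y/r)) (gamma (z/r)) \<le> r * \<bar>y/r - z/r\<bar>"
    using l1dist_gamma_le[of "y/r" "z/r"] assms by (intro mult_left_mono) auto
  also have "\<dots> = \<bar>y - z\<bar>" using assms(1) by (simp add: abs_divide flip: diff_divide_distrib)
  finally show ?thesis by (simp add: theta_r_def)
qed

lemma theta_r_ge:
  assumes "r > 0" "0 \<le> y" "y \<le> r" "0 \<le> z" "z \<le> r"
  shows "\<bar>y - z\<bar>/2 \<le> theta_r r y z"
proof -
  have "\<bar>y - z\<bar>/2 = r * (\<bar>y/r - z/r\<bar>/2)"
    using assms(1) by (simp add: abs_divide flip: diff_divide_distrib)
  also have "\<dots> \<le> r * l1dist (gamma (y/r)) (gamma (z/r))"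
    using l1dist_gamma_ge[of "y/r" "z/r"] assms by (intro mult_left_mono) auto
  finally show ?thesis by (simp add: theta_r_def)
qed

lemma theta_r_commute: "theta_r r y z = theta_r r z y"
  by (simp add: theta_r_def l1dist_commute)

lemma theta_r_mono:
  assumes "r > 0" "0 \<le> t" "t \<le> a" "a \<le> s" "s \<le> r"
  shows "theta_r r s a \<le> theta_r r s t"
  using l1dist_gamma_mono[of "t/r" "a/r" "s/r"] assms
  by (simp add: theta_r_def divide_right_mono)

lemma theta_r_start_peak:
  "r > 0 \<Longrightarrow> N \<ge> 1 \<Longrightarrow> theta_r r (r * piece_start N) (r * piece_peak N) = r * piece_peak N - r * piece_start N"
  by (simp add: theta_r_def l1dist_gamma_start_peak right_diff_distrib)

lemma theta_r_peak_start:
  "r > 0 \<Longrightarrow> N \<ge> 1 \<Longrightarrow>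
    theta_r r (r * piece_peak N) (r * piece_start (Suc N)) = r * piece_start (Suc N) - r * piece_peak N"
  by (simp add: theta_r_def l1dist_gamma_peak_start right_diff_distrib)

lemma theta_r_start_end:
  "r > 0 \<Longrightarrow> N \<ge> 1 \<Longrightarrow> theta_r r (r * piece_start N) r = r * (1 - piece_start N)/2"
  using l1dist_gamma_start_end[of N] by (simp add: theta_r_def)

lemma growth_along_piece_starts:
  assumes r: "r > 0" and N: "N \<ge> 1" and a0: "a0 \<le> r * piece_start N"
    and step: "\<And>a b. a0 \<le> a \<Longrightarrow> a < b \<Longrightarrow> b \<le> r \<Longrightarrow> g a + lam * theta_r r a b \<le> g b"
  shows "g (r * piece_start N) + lam * (r * piece_start (N + k) - r * piece_start N)
    \<le> g (r * piece_start (N + k))"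
proof (induction k)
  case (Suc k)
  let ?s = "\<lambda>i. r * piece_start i" and ?m = "r * piece_peak (N + k)"
  have "?s N \<le> ?s (N + k)" using piece_start_mono[of N "N + k"] r by (intro mult_left_mono) auto
  hence a1: "a0 \<le> ?s (N + k)" using a0 by simp
  have m: "?s (N + k) < ?m" "?m < ?s (Suc (N + k))" using piece_peak_bounds[of "N + k"] r by simp_all
  have "?s (Suc (N + k)) \<le> r" using piece_start_le_1[of "Suc (N + k)"] r by simp
  hence "g (?s (N + k)) + lam * (?m - ?s (N + k)) \<le> g ?m"
    and "g ?m + lam * (?s (Suc (N + k)) - ?m) \<le> g (?s (Suc (N + k)))"
    using step[OF a1 m(1)] step[of ?m "?s (Suc (N + k))"] a1 m
      theta_r_start_peak[OF r, of "N + k"] theta_r_peak_start[OF r, of "N + k"] N by simp_all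
  thus ?case using Suc.IH by (simp add: algebra_simps)
qed simp

lemma sum_flat_then_geometric_le:
  fixes T :: nat and c :: real
  assumes "c \<ge> 0"
  shows "(\<Sum>m<M. if m \<le> T then c else (1/2)^(m+1)) \<le> (real T + 1) * c + (1/2)^(T+1)"
proof -
  let ?h = "\<lambda>m::nat. if m \<le> T then c else (1/2::real)^(m+1)"
  have sum_eq: "(\<Sum>m<M. ?h m) = real (min M (T+1)) * c + ((1/2)^(T+1) - (1/2)^(max M (T+1)))" for M
  proof (induction M)
    case (Suc M)
    show ?case
    proof (cases "M \<le> T")
      case True
      hence "min (Suc M) (T+1) = Suc (min M (T+1))" "max (Suc M) (T+1) = max M (T+1)" by auto
      thus ?thesis using Suc True by (simp add: algebra_simps)
    next
      case False
      hence "min (Suc M) (T+1) = min M (T+1)" "max (Suc M) (T+1) = Suc M" "max M (T+1) = M" by auto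
      moreover have "(1/2::real)^M = 2 * (1/2)^(Suc M)" by simp
      ultimately show ?thesis using Suc False by (simp add: algebra_simps)
    qed
  qed simp
  have "real (min M (T+1)) * c \<le> (real T + 1) * c" using assms by (intro mult_right_mono) auto
  thus ?thesis unfolding sum_eq by (simp add: add_mono)
qed

section \<open>The levels \<open>P k\<close>\<close>

locale pinf_construction =
  fixes P :: "nat \<Rightarrow> (nat \<Rightarrow> real) set"
    and \<rho> :: "nat \<Rightarrow> (nat \<Rightarrow> real) \<Rightarrow> (nat \<Rightarrow> real) \<Rightarrow> real"
    and L :: "nat \<Rightarrow> (nat \<Rightarrow> real) set"
    and q :: "nat \<Rightarrow> nat \<Rightarrow> (nat \<Rightarrow> real)"
    and j :: "(nat \<Rightarrow> real) \<Rightarrow> 'a::metric_space"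
  assumes construction: "construction P \<rho> L q"
    and isometric: "\<forall>k\<ge>1. \<forall>x\<in>P k. \<forall>y\<in>P k. dist (j x) (j y) = \<rho> k x y"
begin

definition jdist :: "(nat \<Rightarrow> real) \<Rightarrow> (nat \<Rightarrow> real) \<Rightarrow> real" where
  "jdist x y = dist (j x) (j y)"

lemma jdist_eq_rho: "k \<ge> 1 \<Longrightarrow> x \<in> P k \<Longrightarrow> y \<in> P k \<Longrightarrow> jdist x y = \<rho> k x y"
  using isometric by (simp add: jdist_def)

lemma jdist_commute: "jdist x y = jdist y x"
  by (simp add: jdist_def dist_commute)

lemma jdist_self [simp]: "jdist x x = 0"
  by (simp add: jdist_def)

lemma jdist_triangle: "jdist x z \<le> jdist x y + jdist y z"
  by (simp add: jdist_def dist_triangle)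

lemma jdist_nonneg: "0 \<le> jdist x y"
  by (simp add: jdist_def)

lemma P_1: "P 1 = {p. p 0 \<in> {0..1} \<and> (\<forall>i\<ge>1. p i = 0)}"
  using construction unfolding construction_def by (elim conjE)

lemma rho_1: "x \<in> P 1 \<Longrightarrow> y \<in> P 1 \<Longrightarrow> \<rho> 1 x y = theta_r 1 (x 0) (y 0)"
  using construction unfolding construction_def by (elim conjE) blast

lemma L_1: "L 1 = {(\<lambda>_. 0)(0 := 1)}"
proof -
  have "L 1 = {(\<lambda>i. if i = 0 then 1 else 0)}"
    using construction unfolding construction_def by (elim conjE)
  thus ?thesis by (simp add: fun_upd_def)
qed

lemma construction_step:
  assumes "k \<ge> 1"
  shows "inj_on (q k) {1::nat..}"
    and "q k ` {1::nat..} \<subseteq> P k - L k"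
    and "\<forall>x\<in>P k - L k. \<forall>\<epsilon>>0. \<exists>n\<ge>1. \<rho> k x (q k n) < \<epsilon>"
    and "P (Suc k) = (P k - q k ` {1::nat..}) \<union> {(q k n)(k := y) | n y. n \<ge> 1 \<and> y \<in> {0..rad k n}}"
    and "\<forall>n\<ge>1. \<forall>m\<ge>1. \<forall>y1\<in>{0..rad k n}. \<forall>y2\<in>{0..rad k m}.
            \<rho> (Suc k) ((q k n)(k := y1)) ((q k m)(k := y2)) =
              (if n = m then theta_r (rad k n) y1 y2
               else theta_r (rad k n) y1 0 + \<rho> k (q k n) (q k m) + theta_r (rad k m) 0 y2)"
    and "\<forall>n\<ge>1. \<forall>y1\<in>{0..rad k n}. \<forall>x\<in>P k - q k ` {1::nat..}.
            \<rho> (Suc k) ((q k n)(k := y1)) x = theta_r (rad k n) y1 0 + \<rho> k (q k n) x \<and>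
            \<rho> (Suc k) x ((q k n)(k := y1)) = \<rho> k x (q k n) + theta_r (rad k n) 0 y1"
    and "L (Suc k) = L k \<union> {(q k n)(k := rad k n) | n. n \<ge> 1}"
proof -
  note step = construction[unfolded construction_def, THEN conjunct2, THEN conjunct2,
      THEN conjunct2, rule_format, OF assms]
  from step show "inj_on (q k) {1::nat..}" by (elim conjE)
  from step show "q k ` {1::nat..} \<subseteq> P k - L k" by (elim conjE)
  from step show "\<forall>x\<in>P k - L k. \<forall>\<epsilon>>0. \<exists>n\<ge>1. \<rho> k x (q k n) < \<epsilon>" by (elim conjE)
  from step show "P (Suc k) = (P k - q k ` {1::nat..}) \<union> {(q k n)(k := y) | n y. n \<ge> 1 \<and> y \<in> {0..rad k n}}"
    by (elim conjE)
  from step show "\<forall>n\<ge>1. \<forall>m\<ge>1. \<forall>y1\<in>{0..rad k n}. \<forall>y2\<in>{0..rad k m}.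
            \<rho> (Suc k) ((q k n)(k := y1)) ((q k m)(k := y2)) =
              (if n = m then theta_r (rad k n) y1 y2
               else theta_r (rad k n) y1 0 + \<rho> k (q k n) (q k m) + theta_r (rad k m) 0 y2)"
    by (elim conjE)
  from step show "\<forall>n\<ge>1. \<forall>y1\<in>{0..rad k n}. \<forall>x\<in>P k - q k ` {1::nat..}.
            \<rho> (Suc k) ((q k n)(k := y1)) x = theta_r (rad k n) y1 0 + \<rho> k (q k n) x \<and>
            \<rho> (Suc k) x ((q k n)(k := y1)) = \<rho> k x (q k n) + theta_r (rad k n) 0 y1"
    by (elim conjE)
  from step show "L (Suc k) = L k \<union> {(q k n)(k := rad k n) | n. n \<ge> 1}" by (elim conjE)
qed

lemma q_inj: "k \<ge> 1 \<Longrightarrow> n \<ge> 1 \<Longrightarrow> m \<ge> 1 \<Longrightarrow> q k n = q k m \<Longrightarrow> n = m"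
  using construction_step(1) unfolding inj_on_def by simp

lemma q_in_P: "k \<ge> 1 \<Longrightarrow> n \<ge> 1 \<Longrightarrow> q k n \<in> P k"
  using construction_step(2) by blast

lemma q_notin_L: "k \<ge> 1 \<Longrightarrow> n \<ge> 1 \<Longrightarrow> q k n \<notin> L k"
  using construction_step(2) by blast

lemma q_dense:
  "k \<ge> 1 \<Longrightarrow> x \<in> P k \<Longrightarrow> x \<notin> L k \<Longrightarrow> e > 0 \<Longrightarrow> \<exists>n\<ge>1. \<rho> k x (q k n) < e"
  using construction_step(3) by blast

lemma P_Suc:
  "k \<ge> 1 \<Longrightarrow> P (Suc k) = (P k - q k ` {1::nat..}) \<union> {(q k n)(k := y) | n y. n \<ge> 1 \<and> y \<in> {0..rad k n}}"
  by (rule construction_step(4))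

lemma L_Suc: "k \<ge> 1 \<Longrightarrow> L (Suc k) = L k \<union> {(q k n)(k := rad k n) | n. n \<ge> 1}"
  by (rule construction_step(7))

lemma rad_pos: "0 < rad k n"
  by (simp add: rad_def)

lemma spine_in_P: "k \<ge> 1 \<Longrightarrow> n \<ge> 1 \<Longrightarrow> y \<in> {0..rad k n} \<Longrightarrow> (q k n)(k := y) \<in> P (Suc k)"
  using P_Suc by blast

lemma P_zero_above: "k \<ge> 1 \<Longrightarrow> x \<in> P k \<Longrightarrow> i \<ge> k \<Longrightarrow> x i = 0"
proof (induction k arbitrary: x i rule: nat_induct_at_least)
  case base thus ?case using P_1 by auto
next
  case (Suc k)
  from Suc.prems(1) consider "x \<in> P k" | n y where "n \<ge> 1" "x = (q k n)(k := y)"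
    using P_Suc[OF Suc.hyps] by blast
  thus ?case
    by cases (use Suc.IH Suc.prems(2) q_in_P[OF Suc.hyps] in auto)
qed

lemma q_upd_zero [simp]: "k \<ge> 1 \<Longrightarrow> n \<ge> 1 \<Longrightarrow> (q k n)(k := 0) = q k n"
  using P_zero_above[OF _ q_in_P] by (auto simp: fun_eq_iff)

lemma P_Suc_cases:
  assumes k: "k \<ge> 1" and x: "x \<in> P (Suc k)"
  obtains (base) "x \<in> P k" "x \<notin> q k ` {1..}" "x k = 0"
    | (spine) n y where "n \<ge> 1" "y \<in> {0..rad k n}" "x = (q k n)(k := y)"
proof -
  have "x \<in> P k - q k ` {1..} \<or> (\<exists>n y. n \<ge> 1 \<and> y \<in> {0..rad k n} \<and> x = (q k n)(k := y))"
    using x P_Suc[OF k] by blast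
  thus thesis using that P_zero_above[OF k, of x k] by blast
qed

lemma P_mono:
  assumes "k \<ge> 1" "k \<le> m" "x \<in> P k"
  shows "x \<in> P m"
  using assms(2)
proof (induction m rule: dec_induct)
  case base show ?case by (fact assms(3))
next
  case (step m)
  hence m: "m \<ge> 1" and x: "x \<in> P m" using assms(1) by auto
  show ?case
  proof (cases "x \<in> q m ` {1..}")
    case True
    then obtain n where n: "n \<ge> 1" "x = q m n" by auto
    have "(q m n)(m := 0) \<in> P (Suc m)" using spine_in_P[OF m n(1)] rad_pos[of m n] by simp
    thus ?thesis using n m by simp
  qed (use P_Suc[OF m] x in blast)
qed

lemma truncate_in_P:
  assumes k: "k \<ge> 1" and x: "x \<in> P (Suc k)"
  shows "x(k := 0) \<in> P k"
proof (cases rule: P_Suc_cases[OF k x, case_names base spine])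
  case base
  hence "x(k := 0) = x" by auto
  thus ?thesis using base by simp
next
  case (spine n y)
  thus ?thesis using q_in_P[OF k spine(1)] k by simp
qed

lemma jdist_spine:
  "k \<ge> 1 \<Longrightarrow> n \<ge> 1 \<Longrightarrow> y1 \<in> {0..rad k n} \<Longrightarrow> y2 \<in> {0..rad k n} \<Longrightarrow>
    jdist ((q k n)(k := y1)) ((q k n)(k := y2)) = theta_r (rad k n) y1 y2"
  using jdist_eq_rho[of "Suc k"] spine_in_P construction_step(5) by simp

lemma jdist_spine_foot:
  "k \<ge> 1 \<Longrightarrow> n \<ge> 1 \<Longrightarrow> y \<in> {0..rad k n} \<Longrightarrow>
    jdist ((q k n)(k := y)) (q k n) = theta_r (rad k n) y 0"
  using jdist_spine[of k n y 0] rad_pos[of k n] by simp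

lemma jdist_spine_base:
  assumes k: "k \<ge> 1" and n: "n \<ge> 1" and y: "y \<in> {0..rad k n}"
    and x: "x \<in> P k" "x \<notin> q k ` {1..}"
  shows "jdist ((q k n)(k := y)) x = jdist ((q k n)(k := y)) (q k n) + jdist (q k n) x"
proof -
  have "x \<in> P (Suc k)" using x P_Suc[OF k] by blast
  hence "jdist ((q k n)(k := y)) x = theta_r (rad k n) y 0 + \<rho> k (q k n) x"
    using jdist_eq_rho[of "Suc k"] spine_in_P[OF k n y] construction_step(6)[OF k] n y x by simp
  thus ?thesis using jdist_spine_foot[OF k n y] jdist_eq_rho[OF k q_in_P[OF k n] x(1)] by simp
qed

lemma jdist_spine_spine:
  assumes k: "k \<ge> 1" and nm: "n \<ge> 1" "m \<ge> 1" "n \<noteq> m"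
    and y: "y \<in> {0..rad k n}" and z: "z \<in> {0..rad k m}"
  shows "jdist ((q k n)(k := y)) ((q k m)(k := z)) =
    jdist ((q k n)(k := y)) (q k n) + jdist (q k n) (q k m) + jdist (q k m) ((q k m)(k := z))"
proof -
  have "jdist ((q k n)(k := y)) ((q k m)(k := z)) =
      theta_r (rad k n) y 0 + \<rho> k (q k n) (q k m) + theta_r (rad k m) 0 z"
    using jdist_eq_rho[of "Suc k"] spine_in_P[OF k] construction_step(5)[OF k] nm y z by simp
  moreover have "jdist (q k m) ((q k m)(k := z)) = theta_r (rad k m) 0 z"
    using jdist_spine_foot[OF k nm(2) z] jdist_commute theta_r_commute by metis
  moreover have "\<rho> k (q k n) (q k m) = jdist (q k n) (q k m)"
    using jdist_eq_rho[OF k q_in_P[OF k nm(1)] q_in_P[OF k nm(2)]] by simp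
  ultimately show ?thesis using jdist_spine_foot[OF k nm(1) y] by simp
qed

lemma jdist_through_level:
  assumes k: "k \<ge> 1" and x: "x \<in> P (Suc k)" and w: "w \<in> P (Suc k)" and ne: "x(k:=0) \<noteq> w(k:=0)"
  shows "jdist x w = jdist x (x(k:=0)) + jdist (x(k:=0)) (w(k:=0)) + jdist (w(k:=0)) w"
proof (cases rule: P_Suc_cases[OF k x, case_names base spine])
  case xb: base
  hence x0: "x(k:=0) = x" by auto
  show ?thesis
  proof (cases rule: P_Suc_cases[OF k w, case_names base spine])
    case base
    hence "w(k:=0) = w" by auto
    thus ?thesis using x0 by simp
  next
    case (spine m z)
    thus ?thesis using jdist_spine_base[OF k spine(1,2) xb(1,2)] x0 jdist_commute k by simp
  qed
next
  case (spine n y)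
  hence x0: "x(k:=0) = q k n" using k by simp
  show ?thesis
  proof (cases rule: P_Suc_cases[OF k w, case_names base spine])
    case base
    hence "w(k:=0) = w" by auto
    thus ?thesis using jdist_spine_base[OF k spine(1,2) base(1,2)] spine(3) x0 by simp
  next
    case wm: (spine m z)
    hence w0: "w(k:=0) = q k m" using k by simp
    hence "n \<noteq> m" using ne x0 by auto
    from jdist_spine_spine[OF k spine(1) wm(1) this spine(2) wm(2)]
    show ?thesis using x0 w0 spine(3) wm(3) by simp
  qed
qed

lemma P_Suc_height:
  assumes k: "k \<ge> 1" and x: "x \<in> P (Suc k)"
  shows "0 \<le> x k" "x k \<le> (1/2)^(k+1)" "jdist x (x(k:=0)) \<le> x k"
    and "x k \<noteq> 0 \<Longrightarrow> \<exists>n\<ge>1. x(k:=0) = q k n \<and> x k \<le> rad k n"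
proof -
  have "0 \<le> x k \<and> x k \<le> (1/2)^(k+1) \<and> jdist x (x(k:=0)) \<le> x k \<and>
      (x k \<noteq> 0 \<longrightarrow> (\<exists>n\<ge>1. x(k:=0) = q k n \<and> x k \<le> rad k n))"
  proof (cases rule: P_Suc_cases[OF k x, case_names base spine])
    case base
    hence "x(k:=0) = x" by auto
    thus ?thesis using base by simp
  next
    case (spine n y)
    have x0: "x(k:=0) = q k n" using spine(1,3) k by simp
    have "jdist x (q k n) = theta_r (rad k n) y 0"
      using jdist_spine_foot[OF k spine(1,2)] spine(3) by simp
    also have "\<dots> \<le> y" using theta_r_le[OF rad_pos, of y k n 0] spine(2) by simp
    finally have "jdist x (x(k:=0)) \<le> y" using x0 by simp
    moreover have "rad k n \<le> (1/2)^(k+1)"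
      unfolding rad_def using spine(1) by (intro power_decreasing) auto
    ultimately show ?thesis using spine x0 by auto
  qed
  thus "0 \<le> x k" "x k \<le> (1/2)^(k+1)" "jdist x (x(k:=0)) \<le> x k"
    "x k \<noteq> 0 \<Longrightarrow> \<exists>n\<ge>1. x(k:=0) = q k n \<and> x k \<le> rad k n" by auto
qed

lemma L_subset_P: "k \<ge> 1 \<Longrightarrow> L k \<subseteq> P k"
proof (induction k rule: nat_induct_at_least)
  case base thus ?case using P_1 L_1 by auto
next
  case (Suc k)
  have "L k \<subseteq> P (Suc k)" using Suc.IH q_notin_L[OF Suc.hyps] P_Suc[OF Suc.hyps] by blast
  moreover have "(q k n)(k := rad k n) \<in> P (Suc k)" if "n \<ge> 1" for n
    using spine_in_P[OF Suc.hyps that] rad_pos[of k n] by simp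
  ultimately show ?case using L_Suc[OF Suc.hyps] by blast
qed

lemma L_mono:
  assumes "k \<ge> 1" "k \<le> m"
  shows "L k \<subseteq> L m"
  using assms(2)
proof (induction m rule: dec_induct)
  case (step m) thus ?case using L_Suc[of m] assms(1) by auto
qed simp

lemma L_cases:
  "k \<ge> 1 \<Longrightarrow> x \<in> L k \<Longrightarrow> x = (\<lambda>_. 0)(0 := 1) \<or> (\<exists>m n. 1 \<le> m \<and> n \<ge> 1 \<and> x = (q m n)(m := rad m n))"
proof (induction k rule: nat_induct_at_least)
  case base thus ?case using L_1 by simp
next
  case (Suc k) thus ?case using L_Suc[OF Suc.hyps] by blast
qed

definition trunc :: "nat \<Rightarrow> (nat \<Rightarrow> real) \<Rightarrow> (nat \<Rightarrow> real)" where
  "trunc m x = (\<lambda>i. if i < m then x i else 0)"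

lemma trunc_P_eq: "k \<ge> 1 \<Longrightarrow> x \<in> P k \<Longrightarrow> trunc k x = x"
  using P_zero_above[of k x] by (auto simp: trunc_def fun_eq_iff)

lemma trunc_in_P:
  assumes m: "1 \<le> m" and mM: "m \<le> M" and x: "x \<in> P M"
  shows "trunc m x \<in> P m"
  using mM x
proof (induction M arbitrary: x rule: dec_induct)
  case base thus ?case using trunc_P_eq m by simp
next
  case (step M)
  have "trunc m (x(M := 0)) = trunc m x" using step.hyps by (auto simp: trunc_def fun_eq_iff)
  moreover have "M \<ge> 1" using step.hyps m by simp
  ultimately show ?case using step.IH[OF truncate_in_P[OF _ step.prems]] by metis
qed

lemma jdist_trunc_le:
  assumes M: "Suc K \<le> M" and x: "x \<in> P M"
  shows "jdist x (trunc (Suc K) x) \<le> (\<Sum>m\<in>{Suc K..<M}. x m)"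
  using M x
proof (induction M arbitrary: x rule: dec_induct)
  case base thus ?case using trunc_P_eq[of "Suc K" x] by simp
next
  case (step M)
  have M1: "M \<ge> 1" using step.hyps by simp
  let ?x' = "x(M := 0)"
  have "trunc (Suc K) x = trunc (Suc K) ?x'" using step.hyps by (auto simp: trunc_def fun_eq_iff)
  hence "jdist x (trunc (Suc K) x) \<le> jdist x ?x' + jdist ?x' (trunc (Suc K) ?x')"
    using jdist_triangle by simp
  also have "jdist x ?x' \<le> x M" using P_Suc_height(3)[OF M1 step.prems] .
  also have "jdist ?x' (trunc (Suc K) ?x') \<le> (\<Sum>m\<in>{Suc K..<M}. ?x' m)"
    using step.IH truncate_in_P[OF M1 step.prems] by blast
  also have "(\<Sum>m\<in>{Suc K..<M}. ?x' m) = (\<Sum>m\<in>{Suc K..<M}. x m)" by (intro sum.cong) auto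
  finally show ?case using step.hyps by (simp add: add.commute)
qed

lemma coordinate_bounds:
  assumes m: "1 \<le> m" "m < M" and x: "x \<in> P M"
  shows "0 \<le> x m" "x m \<le> (1/2)^(m+1)"
    and "x m \<noteq> 0 \<Longrightarrow> \<exists>n\<ge>1. trunc m x = q m n \<and> x m \<le> rad m n"
proof -
  have t: "trunc (Suc m) x \<in> P (Suc m)" using trunc_in_P[of "Suc m" M x] m x by simp
  have a: "trunc (Suc m) x m = x m" by (simp add: trunc_def)
  have b: "(trunc (Suc m) x)(m := 0) = trunc m x" by (auto simp: trunc_def fun_eq_iff)
  show "0 \<le> x m" "x m \<le> (1/2)^(m+1)" "x m \<noteq> 0 \<Longrightarrow> \<exists>n\<ge>1. trunc m x = q m n \<and> x m \<le> rad m n"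
    using P_Suc_height[OF m(1) t] a b by simp_all
qed

section \<open>Spikes\<close>

text \<open>A spike is one of the segments \<open>{q k n} \<times> [0, r\<^sub>n]\<close> added in the construction (or \<open>P 1\<close>
  itself); only its isometry type, its tip in \<open>L\<close> and the absence of other branches at its
  level are recorded.\<close>

definition spike :: "nat \<Rightarrow> (nat \<Rightarrow> real) \<Rightarrow> real \<Rightarrow> bool" where
  "spike K bb r \<longleftrightarrow> r > 0 \<and> (\<forall>i\<ge>K. bb i = 0) \<and> (\<forall>y\<in>{0..r}. bb(K:=y) \<in> P (Suc K)) \<and>
     (\<forall>y\<in>{0..r}. \<forall>y'\<in>{0..r}. jdist (bb(K:=y)) (bb(K:=y')) = theta_r r y y') \<and>
     bb(K:=r) \<in> L (Suc K) \<and>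
     (\<forall>x\<in>P (Suc K). (\<forall>i<K. x i = bb i) \<longrightarrow> (\<exists>y\<in>{0..r}. x = bb(K := y)))"

lemma spike_radius_pos: "spike K bb r \<Longrightarrow> r > 0"
  by (simp add: spike_def)

lemma spike_root_zero: "spike K bb r \<Longrightarrow> bb K = 0"
  by (simp add: spike_def)

lemma spike_in_P: "spike K bb r \<Longrightarrow> y \<in> {0..r} \<Longrightarrow> bb(K:=y) \<in> P (Suc K)"
  by (simp add: spike_def)

lemma jdist_spike:
  "spike K bb r \<Longrightarrow> y \<in> {0..r} \<Longrightarrow> y' \<in> {0..r} \<Longrightarrow> jdist (bb(K:=y)) (bb(K:=y')) = theta_r r y y'"
  by (simp add: spike_def)

lemma spike_tip_in_L: "spike K bb r \<Longrightarrow> bb(K:=r) \<in> L (Suc K)"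
  by (simp add: spike_def)

lemma spike_point:
  assumes "spike K bb r" "x \<in> P (Suc K)" "\<forall>i<K. x i = bb i"
  obtains y where "y \<in> {0..r}" "x = bb(K := y)"
  using assms unfolding spike_def by blast

lemma spike_root_upd: "spike K bb r \<Longrightarrow> bb(K := 0) = bb"
  using spike_root_zero fun_upd_triv by metis

lemma agree_on_level:
  assumes "k \<ge> 1" "x \<in> P k" "y \<in> P k" "\<forall>i<k. x i = y i"
  shows "x = y"
proof
  fix i show "x i = y i"
    using assms P_zero_above[OF assms(1,2), of i] P_zero_above[OF assms(1,3), of i]
    by (cases "i < k") auto
qed

lemma spike_base: "spike 0 (\<lambda>_. 0) 1"
  unfolding spike_def
proof (intro conjI ballI allI impI)
  fix y y' :: real assume "y \<in> {0..1}" "y' \<in> {0..1}"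
  hence "(\<lambda>_. 0)(0 := y) \<in> P 1" "(\<lambda>_. 0)(0 := y') \<in> P 1" using P_1 by auto
  thus "jdist ((\<lambda>_. 0)(0 := y)) ((\<lambda>_. 0)(0 := y')) = theta_r 1 y y'"
    using jdist_eq_rho[of 1] rho_1 by simp
next
  fix x :: "nat \<Rightarrow> real" assume "x \<in> P (Suc 0)"
  hence "x = (\<lambda>_. 0)(0 := x 0) \<and> x 0 \<in> {0..1}" using P_1 by (auto simp: fun_eq_iff)
  thus "\<exists>y\<in>{0..1}. x = (\<lambda>_. 0)(0 := y)" by blast
qed (use P_1 L_1 in auto)

lemma spike_q:
  assumes K: "K \<ge> 1" and n: "n \<ge> 1"
  shows "spike K (q K n) (rad K n)"
proof -
  have branch: "\<exists>y\<in>{0..rad K n}. x = (q K n)(K := y)"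
    if x: "x \<in> P (Suc K)" and pre: "\<forall>i<K. x i = q K n i" for x
  proof (cases rule: P_Suc_cases[OF K x, case_names base spine])
    case base
    have "x = q K n" using agree_on_level[OF K base(1) q_in_P[OF K n] pre] .
    hence False using base(2) n by blast
    thus ?thesis ..
  next
    case (spine m y)
    hence "\<forall>i<K. q K m i = q K n i" using pre by simp
    hence "q K m = q K n" by (rule agree_on_level[OF K q_in_P[OF K spine(1)] q_in_P[OF K n]])
    hence "n = m" using q_inj[OF K spine(1) n] by simp
    thus ?thesis using spine by auto
  qed
  have "(q K n)(K := rad K n) \<in> L (Suc K)" using L_Suc[OF K] n by blast
  thus ?thesis
    unfolding spike_def using P_zero_above[OF K q_in_P[OF K n]] spine_in_P[OF K n]
      jdist_spine[OF K n] branch rad_pos by simp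
qed

definition P_all :: "(nat \<Rightarrow> real) set" where
  "P_all = (\<Union>k\<in>{1..}. P k)"

definition descends :: "nat \<Rightarrow> (nat \<Rightarrow> real) \<Rightarrow> real \<Rightarrow> (nat \<Rightarrow> real) \<Rightarrow> bool" where
  "descends K bb a x \<longleftrightarrow> (\<forall>i<K. x i = bb i) \<and> a < x K"

definition descendants :: "nat \<Rightarrow> (nat \<Rightarrow> real) \<Rightarrow> real \<Rightarrow> (nat \<Rightarrow> real) set" where
  "descendants K bb a = {x\<in>P_all. descends K bb a x}"

lemma common_level:
  assumes "x \<in> P_all" "w \<in> P_all"
  obtains M where "M \<ge> Suc K" "x \<in> P M" "w \<in> P M"
proof -
  obtain M1 M2 where "M1 \<ge> 1" "x \<in> P M1" "M2 \<ge> 1" "w \<in> P M2"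
    using assms by (auto simp: P_all_def)
  hence "x \<in> P (max (max M1 M2) (Suc K))" "w \<in> P (max (max M1 M2) (Suc K))"
    using P_mono[of M1 _ x] P_mono[of M2 _ w] by auto
  thus ?thesis using that[of "max (max M1 M2) (Suc K)"] by simp
qed

lemma jdist_foot_le_at_spike_level:
  assumes sp: "spike K bb r" and a: "0 \<le> a" "a \<le> r"
    and x: "x \<in> P (Suc K)" "descends K bb a x" and w: "w \<in> P (Suc K)" "\<not> descends K bb a w"
  shows "jdist x (bb(K:=a)) \<le> jdist x w"
proof -
  have r: "r > 0" using spike_radius_pos[OF sp] .
  have xpre: "\<forall>i<K. x i = bb i" using x(2) by (simp add: descends_def)
  obtain X where X: "X \<in> {0..r}" "x = bb(K := X)" using spike_point[OF sp x(1) xpre] .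
  have Xa: "a < X" using x(2) X(2) by (simp add: descends_def)
  have foot: "jdist x (bb(K:=a)) = theta_r r X a" using jdist_spike[OF sp X(1)] a X(2) by simp
  show ?thesis
  proof (cases "\<forall>i<K. w i = bb i")
    case True
    then obtain W where W: "W \<in> {0..r}" "w = bb(K := W)" using spike_point[OF sp w(1)] by blast
    have "W \<le> a" using w(2) True W(2) by (auto simp: descends_def)
    hence "theta_r r X a \<le> theta_r r X W" using theta_r_mono[OF r, of W a X] W(1) Xa X(1) by simp
    thus ?thesis using foot jdist_spike[OF sp X(1) W(1)] X(2) W(2) by simp
  next
    case False
    then obtain i where i: "i < K" "w i \<noteq> bb i" by auto
    have x0: "x(K:=0) = bb" using X(2) spike_root_upd[OF sp] by simp
    hence "x(K:=0) \<noteq> w(K:=0)" using i by auto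
    hence "jdist x (x(K:=0)) \<le> jdist x w"
      using jdist_through_level[of K x w] i x(1) w(1) jdist_nonneg[of "x(K:=0)" "w(K:=0)"]
        jdist_nonneg[of "w(K:=0)" w] by simp
    moreover have "jdist x (x(K:=0)) = theta_r r X 0"
      using jdist_spike[OF sp X(1), of 0] r x0 X(2) spike_root_upd[OF sp] by simp
    moreover have "theta_r r X a \<le> theta_r r X 0"
      using theta_r_mono[OF r, of 0 a X] a Xa X(1) by simp
    ultimately show ?thesis using foot by simp
  qed
qed

text \<open>Induction on the level: above the spike, a descendant and a non-descendant only meet
  through their truncations.\<close>

lemma jdist_foot_le_nondescendant:
  assumes sp: "spike K bb r" and a: "0 \<le> a" "a \<le> r"
    and x: "x \<in> descendants K bb a" and w: "w \<in> P_all" "w \<notin> descendants K bb a"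
  shows "jdist x (bb(K:=a)) \<le> jdist x w"
proof -
  have xd: "descends K bb a x" and wd: "\<not> descends K bb a w"
    using x w by (auto simp: descendants_def)
  obtain M where M: "M \<ge> Suc K" "x \<in> P M" "w \<in> P M"
    using common_level[of x w] x w by (auto simp: descendants_def)
  have "\<forall>x w. x \<in> P M \<longrightarrow> w \<in> P M \<longrightarrow> descends K bb a x \<longrightarrow> \<not> descends K bb a w \<longrightarrow>
      jdist x (bb(K:=a)) \<le> jdist x w"
    using M(1)
  proof (induction M rule: dec_induct)
    case base
    show ?case by (intro allI impI) (rule jdist_foot_le_at_spike_level[OF sp a])
  next
    case (step M)
    have M1: "M \<ge> 1" using step.hyps by simp
    show ?case
    proof (intro allI impI)
      fix x w assume x: "x \<in> P (Suc M)" "descends K bb a x" and w: "w \<in> P (Suc M)" "\<not> descends K bb a w"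
      have trunc_descends: "descends K bb a (z(M:=0)) = descends K bb a z" for z
        using step.hyps by (auto simp: descends_def)
      have "x(M:=0) \<noteq> w(M:=0)"
      proof
        assume "x(M:=0) = w(M:=0)"
        hence "descends K bb a x = descends K bb a w" using trunc_descends by metis
        thus False using x(2) w(2) by simp
      qed
      hence "jdist x w = jdist x (x(M:=0)) + jdist (x(M:=0)) (w(M:=0)) + jdist (w(M:=0)) w"
        by (rule jdist_through_level[OF M1 x(1) w(1)])
      moreover have "jdist (x(M:=0)) (bb(K:=a)) \<le> jdist (x(M:=0)) (w(M:=0))"
        using step.IH[rule_format, OF truncate_in_P[OF M1 x(1)] truncate_in_P[OF M1 w(1)]]
          x(2) w(2) trunc_descends by simp
      moreover have "jdist x (bb(K:=a)) \<le> jdist x (x(M:=0)) + jdist (x(M:=0)) (bb(K:=a))"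
        by (rule jdist_triangle)
      ultimately show "jdist x (bb(K:=a)) \<le> jdist x w" using jdist_nonneg[of "w(M:=0)" w] by linarith
    qed
  qed
  thus ?thesis using M xd wd by blast
qed

text \<open>Nothing grows out of the tip of a spike, because points of \<open>L\<close> are never branched.\<close>

lemma spike_tip_unique:
  assumes sp: "spike K bb r" and M: "Suc K \<le> M" and x: "x \<in> P M"
    and pre: "\<forall>i<K. x i = bb i" and xr: "x K = r"
  shows "x = bb(K := r)"
  using M x pre xr
proof (induction M arbitrary: x rule: dec_induct)
  case base
  then obtain y where "x = bb(K := y)" using spike_point[OF sp] by blast
  thus ?case using base.prems(3) by simp
next
  case (step M)
  have M1: "M \<ge> 1" using step.hyps by simp
  have "\<forall>i<K. (x(M:=0)) i = bb i" "(x(M:=0)) K = r" using step.prems(2,3) step.hyps by auto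
  hence tip: "x(M:=0) = bb(K := r)" by (rule step.IH[OF truncate_in_P[OF M1 step.prems(1)]])
  show ?case
  proof (cases "x M = 0")
    case True
    hence "x(M:=0) = x" by auto
    thus ?thesis using tip by simp
  next
    case False
    then obtain n where "n \<ge> 1" "x(M:=0) = q M n" using P_Suc_height(4)[OF M1 step.prems(1)] by blast
    moreover have "bb(K := r) \<in> L M" using spike_tip_in_L[OF sp] L_mono[of "Suc K" M] step.hyps by auto
    ultimately show ?thesis using q_notin_L[OF M1] tip by auto
  qed
qed

lemma descendant_branch:
  assumes sp: "spike K bb r" and m: "Suc K \<le> m" "m < M"
    and x: "x \<in> P M" "\<forall>i<K. x i = bb i" and xm: "x m \<noteq> 0"
  obtains n where "n \<ge> 1" "x m \<le> rad m n" "\<forall>i<K. q m n i = bb i" "q m n K = x K" "x K < r"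
proof -
  have m1: "1 \<le> m" using m by simp
  obtain n where n: "n \<ge> 1" "trunc m x = q m n" "x m \<le> rad m n"
    using coordinate_bounds(3)[OF m1 m(2) x(1) xm] by blast
  have agree: "q m n i = x i" if "i < m" for i
    using fun_cong[OF n(2), of i] that by (simp add: trunc_def)
  hence pre: "\<forall>i<K. q m n i = bb i" and qK: "q m n K = x K" using x(2) m by auto
  have "trunc (Suc K) x \<in> P (Suc K)" using trunc_in_P[of "Suc K" M x] m x by simp
  moreover have "\<forall>i<K. trunc (Suc K) x i = bb i" using x(2) by (simp add: trunc_def)
  ultimately obtain y where "y \<in> {0..r}" "trunc (Suc K) x = bb(K := y)"
    using spike_point[OF sp] by blast
  hence le: "x K \<le> r" by (auto simp: trunc_def fun_eq_iff split: if_splits)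
  have "x K \<noteq> r"
  proof
    assume "x K = r"
    hence "q m n = bb(K := r)"
      using spike_tip_unique[OF sp m(1) q_in_P[OF m1 n(1)] pre] qK by simp
    moreover have "bb(K := r) \<in> L m" using spike_tip_in_L[OF sp] L_mono[of "Suc K" m] m(1) by auto
    ultimately show False using q_notin_L[OF m1 n(1)] by simp
  qed
  thus thesis using that n(1,3) pre qK le by simp
qed

lemma jdist_tip_le:
  assumes sp: "spike K bb r" and M: "Suc K \<le> M" and x: "x \<in> P M" "\<forall>i<K. x i = bb i"
  shows "jdist x (bb(K:=r)) \<le> (r - x K) + (\<Sum>m\<in>{Suc K..<M}. x m)"
proof -
  let ?t = "trunc (Suc K) x"
  have "?t \<in> P (Suc K)" using trunc_in_P[of "Suc K" M x] M x by simp
  moreover have "\<forall>i<K. ?t i = bb i" using x(2) by (simp add: trunc_def)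
  ultimately obtain X where X: "X \<in> {0..r}" "?t = bb(K := X)" using spike_point[OF sp] by blast
  have "X = x K" using fun_cong[OF X(2), of K] by (simp add: trunc_def)
  have "jdist ?t (bb(K:=r)) = theta_r r X r"
    using jdist_spike[OF sp X(1)] X(2) spike_radius_pos[OF sp] by simp
  also have "\<dots> \<le> r - X" using theta_r_le[OF spike_radius_pos[OF sp], of X r] X(1) by simp
  finally show ?thesis
    using \<open>X = x K\<close> jdist_trunc_le[OF M x(1)] jdist_triangle[of x "bb(K:=r)" ?t] by linarith
qed

lemma descendant_coordinate_small:
  assumes sp: "spike K bb r" and m: "Suc K \<le> m" "m < M"
    and x: "x \<in> P M" "\<forall>i<K. x i = bb i" "a < x K"
    and feet: "\<And>n. 1 \<le> n \<Longrightarrow> n < N \<Longrightarrow> \<forall>i<K. q m n i = bb i \<Longrightarrow> q m n K < r \<Longrightarrow> q m n K \<le> a"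
  shows "x m \<le> (1/2)^N"
proof (cases "x m = 0")
  case False
  then obtain n where n: "n \<ge> 1" "x m \<le> rad m n" "\<forall>i<K. q m n i = bb i" "q m n K = x K" "x K < r"
    using descendant_branch[OF sp m x(1,2)] by blast
  have "N \<le> n" using feet[OF n(1) _ n(3)] n(4,5) x(3) by force
  hence "rad m n \<le> (1/2)^N" unfolding rad_def by (intro power_decreasing) auto
  thus ?thesis using n(2) by simp
qed simp

text \<open>Only finitely many spikes of index below \<open>N\<close> and level at most \<open>T\<close> branch off the spike
  below its tip. Above all their feet, a descendant can only branch through spikes of length at
  most \<open>2\<^sup>-\<^sup>N\<close> or at levels above \<open>T\<close>, whose total length is small.\<close>

lemma descendants_near_tip:
  assumes sp: "spike K bb r" and e: "\<epsilon> > 0"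
  obtains a0 where "0 \<le> a0" "a0 < r" "r - a0 \<le> \<epsilon>"
    "\<And>a x. a0 \<le> a \<Longrightarrow> x \<in> descendants K bb a \<Longrightarrow> jdist x (bb(K:=r)) \<le> \<epsilon>"
proof -
  obtain T :: nat where T: "(1/2::real)^T < \<epsilon>/3"
    using real_arch_pow_inv[of "\<epsilon>/3" "1/2"] e by auto
  have "(1/2::real)^(T+1) \<le> (1/2)^T" by (rule power_decreasing) auto
  hence T': "(1/2::real)^(T+1) \<le> \<epsilon>/3" using T by linarith
  obtain N :: nat where N: "(1/2::real)^N < (\<epsilon>/3) / (real T + 1)"
    using real_arch_pow_inv[of "(\<epsilon>/3) / (real T + 1)" "1/2"] e by auto
  have N': "(real T + 1) * (1/2::real)^N \<le> \<epsilon>/3" using N by (simp add: field_simps)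
  define V where "V = {q m n K | m n. m \<in> {Suc K..T} \<and> n \<in> {1..<N} \<and>
    (\<forall>i<K. q m n i = bb i) \<and> q m n K < r}"
  have "V \<subseteq> (\<lambda>(m, n). q m n K) ` ({Suc K..T} \<times> {1..<N})" by (auto simp: V_def)
  hence finV: "finite V" by (rule finite_subset) simp
  define a0 where "a0 = Max (insert (max 0 (r - \<epsilon>/3)) V)"
  have a0ge: "max 0 (r - \<epsilon>/3) \<le> a0" unfolding a0_def using finV by (intro Max_ge) auto
  have Vle: "v \<le> a0" if "v \<in> V" for v unfolding a0_def using finV that by (intro Max_ge) auto
  have a0lt: "a0 < r"
    unfolding a0_def using finV spike_radius_pos[OF sp] e by (subst Max_less_iff) (auto simp: V_def)
  define h where "h m = (if m \<le> T then (1/2::real)^N else (1/2)^(m+1))" for m :: nat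
  have "jdist x (bb(K:=r)) \<le> \<epsilon>" if a: "a0 \<le> a" and xd: "x \<in> descendants K bb a" for a x
  proof -
    have pre: "\<forall>i<K. x i = bb i" and xa: "a < x K"
      using xd by (auto simp: descendants_def descends_def)
    obtain M where M: "M \<ge> Suc K" "x \<in> P M"
      using common_level[of x x] xd by (auto simp: descendants_def)
    have "x m \<le> h m" if m: "m \<in> {Suc K..<M}" for m
    proof (cases "m \<le> T")
      case True
      have "q m n K \<le> a" if "1 \<le> n" "n < N" "\<forall>i<K. q m n i = bb i" "q m n K < r" for n
        using Vle[of "q m n K"] m True that a unfolding V_def by force
      thus ?thesis using descendant_coordinate_small[OF sp _ _ M(2) pre xa] m True
        by (simp add: h_def)
    next
      case False
      thus ?thesis using coordinate_bounds(2)[of m M x] m M by (simp add: h_def)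
    qed
    hence "(\<Sum>m\<in>{Suc K..<M}. x m) \<le> (\<Sum>m\<in>{Suc K..<M}. h m)" by (intro sum_mono)
    also have "\<dots> \<le> (\<Sum>m<M. h m)" by (intro sum_mono2) (auto simp: h_def)
    also have "\<dots> \<le> (real T + 1) * (1/2)^N + (1/2)^(T+1)"
      unfolding h_def by (rule sum_flat_then_geometric_le) simp
    finally show ?thesis using jdist_tip_le[OF sp M pre] N' T' xa a a0ge by linarith
  qed
  moreover have "0 \<le> a0" "r - a0 \<le> \<epsilon>" using a0ge e by auto
  ultimately show thesis using that a0lt by blast
qed

lemma spine_point_notin_L:
  assumes k: "k \<ge> 1" and n: "n \<ge> 1" and y: "0 < y" "y < rad k n"
  shows "(q k n)(k := y) \<notin> L (Suc k)"
proof
  assume "(q k n)(k := y) \<in> L (Suc k)"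
  then consider "(q k n)(k := y) \<in> L k" | m where "m \<ge> 1" "(q k n)(k := y) = (q k m)(k := rad k m)"
    using L_Suc[OF k] by blast
  thus False
  proof cases
    case 1
    hence "((q k n)(k := y)) k = 0" using L_subset_P[OF k] P_zero_above[OF k] by blast
    thus False using y by simp
  next
    case (2 m)
    have "((q k n)(k := y))(k := 0) = ((q k m)(k := rad k m))(k := 0)" using 2(2) by simp
    hence "q k n = q k m" using k n 2(1) by simp
    hence "m = n" using q_inj[OF k 2(1) n] by simp
    thus False using fun_cong[OF 2(2), of k] y by simp
  qed
qed

lemma jdist_spine_point_pos:
  assumes k: "k \<ge> 1" and n: "n \<ge> 1" and y: "0 < y" "y \<le> rad k n"
    and w: "w \<in> P (Suc k)" "w \<noteq> (q k n)(k := y)"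
  shows "jdist ((q k n)(k := y)) w > 0"
proof -
  let ?x = "(q k n)(k := y)"
  have yr: "y \<in> {0..rad k n}" using y by simp
  have x0: "?x(k := 0) = q k n" using k n by simp
  have foot: "jdist ?x (q k n) > 0"
    using jdist_spine_foot[OF k n yr] theta_r_ge[OF rad_pos, of y k n 0] y by simp
  show ?thesis
  proof (cases "w(k := 0) = q k n")
    case False
    hence "jdist ?x w = jdist ?x (q k n) + jdist (q k n) (w(k:=0)) + jdist (w(k:=0)) w"
      using jdist_through_level[OF k spine_in_P[OF k n yr] w(1)] x0 by simp
    thus ?thesis using foot jdist_nonneg[of "q k n" "w(k:=0)"] jdist_nonneg[of "w(k:=0)" w] by linarith
  next
    case True
    show ?thesis
    proof (cases rule: P_Suc_cases[OF k w(1), case_names base spine])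
      case base
      hence "w = q k n" using True by (metis fun_upd_triv)
      thus ?thesis using base(2) n by blast
    next
      case (spine m z)
      hence "q k m = q k n" using True k by simp
      hence "m = n" using q_inj[OF k spine(1) n] by simp
      hence "z \<noteq> y" "z \<in> {0..rad k n}" using w(2) spine by auto
      thus ?thesis using jdist_spine[OF k n yr] theta_r_ge[OF rad_pos, of y k n z] yr spine(3) \<open>m = n\<close>
        by fastforce
    qed
  qed
qed

text \<open>Off \<open>L\<close>, step up a spine at a height \<open>y\<close> avoiding the countably many coordinates used by
  \<open>Q\<^sub>M\<^sub>+\<^sub>1\<close>. Then \<open>q (Suc M) n\<close> can only approach the new point for large \<open>n\<close>,
  where its spike is short.\<close>

lemma spike_tips_dense_off_L:
  assumes M: "M \<ge> 1" "x \<in> P M" "x \<notin> L M" and e: "\<epsilon> > 0"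
  obtains K bb r where "spike K bb r" "jdist x (bb(K:=r)) < \<epsilon>"
proof -
  have M1: "Suc M \<ge> 1" by simp
  obtain n1 where n1: "n1 \<ge> 1" "\<rho> M x (q M n1) < \<epsilon>/4" using q_dense[OF M, of "\<epsilon>/4"] e by auto
  have Dxq: "jdist x (q M n1) < \<epsilon>/4" using n1 jdist_eq_rho[OF M(1,2) q_in_P[OF M(1) n1(1)]] by simp
  let ?c = "min (rad M n1) (\<epsilon>/4)"
  have "uncountable {0<..<?c}" using rad_pos[of M n1] e by (simp add: uncountable_open_interval)
  then obtain y where y: "y \<in> {0<..<?c}" "y \<notin> range (\<lambda>n. q (Suc M) n M)"
    by (metis countable_image countable_subset subsetI uncountable_def)
  have yr: "y \<in> {0..rad M n1}" "0 < y" "y < rad M n1" "y < \<epsilon>/4" using y by auto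
  define x' where "x' = (q M n1)(M := y)"
  have x'P: "x' \<in> P (Suc M)" unfolding x'_def using spine_in_P[OF M(1) n1(1) yr(1)] .
  have Dx'q: "jdist (q M n1) x' < \<epsilon>/4"
    using jdist_spine_foot[OF M(1) n1(1) yr(1)] theta_r_le[OF rad_pos, of y M n1 0] yr jdist_commute
    by (simp add: x'_def)
  have qpos: "jdist x' (q (Suc M) n) > 0" if "n \<ge> 1" for n
  proof -
    have "q (Suc M) n M \<noteq> x' M" using y(2) by (auto simp: x'_def)
    hence "q (Suc M) n \<noteq> x'" by auto
    thus ?thesis using jdist_spine_point_pos[OF M(1) n1(1) yr(2) less_imp_le[OF yr(3)] q_in_P[OF M1 that]]
      by (simp add: x'_def)
  qed
  obtain N0 :: nat where N0: "(1/2::real)^N0 < \<epsilon>/4" using real_arch_pow_inv[of "\<epsilon>/4" "1/2"] e by auto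
  define \<delta> where "\<delta> = Min (insert (\<epsilon>/4) ((\<lambda>n. jdist x' (q (Suc M) n)) ` {1..<N0}))"
  have \<delta>0: "\<delta> > 0" unfolding \<delta>_def using e qpos by (subst Min_gr_iff) auto
  have \<delta>le: "\<delta> \<le> jdist x' (q (Suc M) n)" if "n \<in> {1..<N0}" for n
    unfolding \<delta>_def using that by (intro Min_le) auto
  have \<delta>le': "\<delta> \<le> \<epsilon>/4" unfolding \<delta>_def by (intro Min_le) auto
  obtain n where n: "n \<ge> 1" "\<rho> (Suc M) x' (q (Suc M) n) < \<delta>"
    using q_dense[OF M1 x'P _ \<delta>0] spine_point_notin_L[OF M(1) n1(1) yr(2,3)] by (auto simp: x'_def)
  have Dn: "jdist x' (q (Suc M) n) < \<delta>" using n jdist_eq_rho[OF M1 x'P q_in_P[OF M1 n(1)]] by simp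
  hence "N0 \<le> n" using \<delta>le[of n] n(1) by (cases "n < N0") auto
  let ?tip = "(q (Suc M) n)(Suc M := rad (Suc M) n)"
  have rr: "rad (Suc M) n \<in> {0..rad (Suc M) n}" using rad_pos[of "Suc M" n] by simp
  have "jdist (q (Suc M) n) ?tip \<le> rad (Suc M) n"
    using jdist_spine_foot[OF M1 n(1) rr] theta_r_le[OF rad_pos, of "rad (Suc M) n" "Suc M" n 0] rr
      jdist_commute by simp
  also have "\<dots> \<le> (1/2)^N0" unfolding rad_def using \<open>N0 \<le> n\<close> by (intro power_decreasing) auto
  finally have Dtip: "jdist (q (Suc M) n) ?tip < \<epsilon>/4" using N0 by linarith
  have "jdist x ?tip \<le> jdist x (q M n1) + jdist (q M n1) x' + jdist x' (q (Suc M) n) + jdist (q (Suc M) n) ?tip"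
    using jdist_triangle[of x ?tip "q M n1"] jdist_triangle[of "q M n1" ?tip x']
      jdist_triangle[of x' ?tip "q (Suc M) n"] by linarith
  hence "jdist x ?tip < \<epsilon>" using Dxq Dx'q Dn \<delta>le' Dtip by linarith
  thus thesis using that spike_q[OF M1 n(1)] by blast
qed

lemma spike_tips_dense:
  assumes M: "M \<ge> 1" "x \<in> P M" and e: "\<epsilon> > 0"
  obtains K bb r where "spike K bb r" "jdist x (bb(K:=r)) < \<epsilon>"
proof (cases "x \<in> L M")
  case True
  then consider "x = (\<lambda>_. 0)(0 := 1)" | m n where "1 \<le> m" "n \<ge> 1" "x = (q m n)(m := rad m n)"
    using L_cases[OF M(1)] by blast
  thus thesis
  proof cases
    case 1 thus thesis using that[OF spike_base] e by simp
  next
    case (2 m n) thus thesis using that[OF spike_q[OF 2(1,2)]] e by simp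
  qed
qed (use spike_tips_dense_off_L[OF M] e that in blast)

end

section \<open>Slopes along spikes\<close>

locale dense_pinf_construction = pinf_construction P \<rho> L q j
  for P \<rho> L q and j :: "(nat \<Rightarrow> real) \<Rightarrow> 'a::complete_space" +
  assumes dense: "closure (j ` (\<Union>k\<in>{1::nat..}. P k)) = UNIV"
begin

lemma P_all_approx:
  assumes "\<eta> > 0"
  shows "\<exists>v\<in>P_all. dist (j v) z < \<eta>"
proof -
  have "z \<in> closure (j ` P_all)" using dense by (simp add: P_all_def)
  thus ?thesis using assms unfolding closure_approachable by blast
qed

text \<open>Away from the foot, the closure of the descendants is a neighbourhood of its points: a nearby
  non-descendant would be closer to a descendant than the foot is.\<close>

lemma ball_subset_closure_descendants:
  assumes sp: "spike K bb r" and a: "0 \<le> a" "a \<le> r"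
    and w: "w \<in> closure (j ` descendants K bb a)" and e: "e = dist w (j (bb(K:=a)))" "e > 0"
  shows "ball w (e/3) \<subseteq> closure (j ` descendants K bb a)"
proof
  fix z assume z: "z \<in> ball w (e/3)"
  show "z \<in> closure (j ` descendants K bb a)" unfolding closure_approachable
  proof (intro allI impI)
    fix \<eta> :: real assume \<eta>: "\<eta> > 0"
    define \<eta>' where "\<eta>' = min \<eta> (e/6)"
    have \<eta>': "\<eta>' > 0" "\<eta>' \<le> \<eta>" "\<eta>' \<le> e/6" using \<eta> e by (auto simp: \<eta>'_def)
    obtain v where v: "v \<in> P_all" "dist (j v) z < \<eta>'" using P_all_approx[OF \<eta>'(1)] by blast
    obtain x where x: "x \<in> descendants K bb a" "dist (j x) w < \<eta>'"
      using w \<eta>'(1) unfolding closure_approachable by blast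
    have "v \<in> descendants K bb a"
    proof (rule ccontr)
      assume "v \<notin> descendants K bb a"
      hence "jdist x (bb(K:=a)) \<le> jdist x v" by (rule jdist_foot_le_nondescendant[OF sp a x(1) v(1)])
      moreover have "e - \<eta>' \<le> jdist x (bb(K:=a))"
        using dist_triangle[of w "j (bb(K:=a))" "j x"] x e by (simp add: jdist_def dist_commute)
      moreover have "jdist x v < \<eta>' + e/3 + \<eta>'"
        using dist_triangle[of "j x" "j v" w] dist_triangle[of w "j v" z] x v z
        by (simp add: jdist_def dist_commute)
      ultimately show False using \<eta>'(3) e(2) by linarith
    qed
    thus "\<exists>y\<in>j ` descendants K bb a. dist y z < \<eta>" using v \<eta>' by force
  qed
qed

lemma descendants_with_foot_in_ball:
  assumes sp: "spike K bb r" and a: "0 \<le> a" "a \<le> r" "r - a \<le> d/4" and d: "d > 0"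
    and near: "\<And>x. x \<in> descendants K bb a \<Longrightarrow> jdist x (bb(K:=r)) \<le> d/4"
  shows "closure (j ` descendants K bb a) \<union> {j (bb(K:=a))} \<subseteq> ball (j (bb(K:=r))) d"
proof -
  let ?p = "j (bb(K:=r))"
  have r: "r > 0" using spike_radius_pos[OF sp] .
  have "j ` descendants K bb a \<subseteq> cball ?p (d/4)"
    using near by (auto simp: jdist_def dist_commute)
  hence "closure (j ` descendants K bb a) \<subseteq> cball ?p (d/4)" by (intro closure_minimal) auto
  moreover have "dist ?p (j (bb(K:=a))) \<le> d/4"
    using jdist_spike[OF sp, of a r] theta_r_le[OF r, of a r] a r theta_r_commute
    by (simp add: jdist_def dist_commute)
  ultimately show ?thesis using d by auto
qed

text \<open>Ekeland's principle on the closure of the descendants of \<open>bb(K:=a)\<close> (plus the foot) yields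
  a point where \<open>u\<close> grows at most at rate \<open>lam\<close>; as the slope there is at least \<open>c > lam\<close>,
  that point must be the foot itself.\<close>

lemma slope_growth_along_spike:
  fixes \<Omega> :: "'a set" and u l :: "'a \<Rightarrow> real"
  assumes sp: "spike K bb r"
    and ball: "ball (j (bb(K:=r))) d \<subseteq> \<Omega>"
    and u_lb: "\<And>z. z \<in> ball (j (bb(K:=r))) d \<Longrightarrow> u z \<ge> u (j (bb(K:=r))) - 1"
    and u_cont: "continuous_on (closure \<Omega>) u"
    and slope: "\<forall>x\<in>\<Omega>. local_slope (closure \<Omega>) u x = ereal (l x)"
    and l_ge: "\<And>x. x \<in> \<Omega> \<Longrightarrow> l x \<ge> c" and lam: "0 < lam" "lam < c"
    and near: "\<And>x. x \<in> descendants K bb a \<Longrightarrow> jdist x (bb(K:=r)) \<le> d/4"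
    and ab: "0 \<le> a" "a < b" "b \<le> r" "r - a \<le> d/4" and d: "d > 0"
  shows "u (j (bb(K:=a))) + lam * theta_r r a b \<le> u (j (bb(K:=b)))"
proof -
  let ?p = "j (bb(K:=r))" and ?D = "closure (j ` descendants K bb a)"
  have ab': "a \<in> {0..r}" "b \<in> {0..r}" using ab by auto
  define F where "F = ?D \<union> {j (bb(K:=a))}"
  have "F \<subseteq> ball ?p d"
    unfolding F_def using ab d by (intro descendants_with_foot_in_ball[OF sp _ _ _ _ near]) auto
  hence FO: "F \<subseteq> \<Omega>" and u_lbF: "\<And>x. x \<in> F \<Longrightarrow> u x \<ge> u ?p - 1" using ball u_lb by auto
  have "bb(K:=b) \<in> descendants K bb a"
    using spike_in_P[OF sp ab'(2)] ab unfolding descendants_def descends_def P_all_def by auto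
  hence "j (bb(K:=b)) \<in> j ` descendants K bb a" by blast
  hence bF: "j (bb(K:=b)) \<in> F" using closure_subset[of "j ` descendants K bb a"] unfolding F_def by blast
  have "continuous_on F u"
    using continuous_on_subset[OF u_cont] FO closure_subset[of \<Omega>] by blast
  then obtain w where wF: "w \<in> F" and w1: "u w + lam * dist (j (bb(K:=b))) w \<le> u (j (bb(K:=b)))"
    and w2: "\<forall>x\<in>F. u w \<le> u x + lam * dist w x"
    using ekeland_variational_principle[of F "j (bb(K:=b))" u "u ?p - 1" lam] bF u_lbF lam(1)
    unfolding F_def by blast
  show ?thesis
  proof (cases "w = j (bb(K:=a))")
    case True
    thus ?thesis using w1 jdist_spike[OF sp ab'(2,1)] theta_r_commute by (simp add: jdist_def)
  next
    case False
    hence "w \<in> ?D" using wF by (auto simp: F_def)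
    hence ballF: "ball w (dist w (j (bb(K:=a))) / 3) \<subseteq> F"
      using ball_subset_closure_descendants[OF sp ab(1) _ _ refl] ab False by (auto simp: F_def)
    have wO: "w \<in> \<Omega>" using wF FO by auto
    have "local_slope (closure \<Omega>) u w \<le> ereal lam"
    proof (rule local_slope_le)
      show "dist w (j (bb(K:=a))) / 3 > 0" using False by simp
      fix x assume "x \<in> closure \<Omega>" "x \<noteq> w" "dist x w < dist w (j (bb(K:=a))) / 3"
      hence "x \<in> F" using ballF by (auto simp: dist_commute)
      thus "u w \<le> u x + lam * dist w x" using w2 by blast
    qed (use lam in simp)
    hence "l w \<le> lam" using slope wO by simp
    thus ?thesis using l_ge[OF wO] lam by simp
  qed
qed

lemma dist_tip_piece_start:
  assumes sp: "spike K bb r" and N: "N \<ge> 1"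
  shows "dist (j (bb(K:=r))) (j (bb(K := r * piece_start N))) = r * (1 - piece_start N) / 2"
proof -
  have r: "r > 0" using spike_radius_pos[OF sp] .
  have s: "r * piece_start N \<in> {0..r}" using piece_start_nonneg[OF N] piece_start_le_1[of N] r by auto
  have "dist (j (bb(K:=r))) (j (bb(K := r * piece_start N))) = jdist (bb(K := r * piece_start N)) (bb(K:=r))"
    unfolding jdist_def by (rule dist_commute)
  also have "\<dots> = theta_r r (r * piece_start N) r" using jdist_spike[OF sp s] r by simp
  also have "\<dots> = r * (1 - piece_start N) / 2" using theta_r_start_end[OF r N] .
  finally show ?thesis .
qed

lemma piece_start_points_tendsto_tip:
  assumes sp: "spike K bb r" and N1: "N1 \<ge> 1"
  shows "(\<lambda>n. j (bb(K := r * piece_start (n + N1)))) \<longlonglongrightarrow> j (bb(K:=r))"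
proof -
  have "(\<lambda>n. piece_start (n + N1)) \<longlonglongrightarrow> 1"
    by (rule LIMSEQ_ignore_initial_segment[OF piece_start_limit])
  hence "(\<lambda>n. r * (1 - piece_start (n + N1)) / 2) \<longlonglongrightarrow> r * (1 - 1) / 2"
    by (intro tendsto_intros) auto
  moreover have "(\<lambda>n. r * (1 - piece_start (n + N1)) / 2) =
      (\<lambda>n. dist (j (bb(K := r * piece_start (n + N1)))) (j (bb(K:=r))))"
  proof
    fix n
    have "n + N1 \<ge> 1" using N1 by simp
    thus "r * (1 - piece_start (n + N1)) / 2 = dist (j (bb(K := r * piece_start (n + N1)))) (j (bb(K:=r)))"
      by (subst dist_commute, rule dist_tip_piece_start[OF sp, symmetric])
  qed
  ultimately have "(\<lambda>n. dist (j (bb(K := r * piece_start (n + N1)))) (j (bb(K:=r)))) \<longlonglongrightarrow> 0"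
    by simp
  thus ?thesis by (rule tendsto_dist_iff[THEN iffD2])
qed

lemma tip_gain_ge:
  fixes u :: "'a \<Rightarrow> real"
  assumes sp: "spike K bb r" and lam: "lam \<ge> 0"
    and growth: "\<And>a b. a0 \<le> a \<Longrightarrow> a < b \<Longrightarrow> b \<le> r \<Longrightarrow>
      u (j (bb(K:=a))) + lam * theta_r r a b \<le> u (j (bb(K:=b)))"
    and N: "N \<ge> 1" "a0 \<le> r * piece_start N"
  shows "2 * lam * (1 - (1/2)^k) * dist (j (bb(K:=r))) (j (bb(K := r * piece_start N)))
    \<le> u (j (bb(K:=r))) - u (j (bb(K := r * piece_start N)))"
proof -
  let ?g = "\<lambda>y. u (j (bb(K:=y)))" and ?s = "\<lambda>i. r * piece_start i"
  have r: "r > 0" using spike_radius_pos[OF sp] .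
  have "?s N \<le> ?s (N + k)" using piece_start_mono[of N "N + k"] r by (intro mult_left_mono) auto
  hence a0: "a0 \<le> ?s (N + k)" using N(2) by simp
  have s: "0 \<le> ?s (N + k)" "?s (N + k) < r"
    using piece_start_nonneg[of "N + k"] piece_start_le_1[of "N + k"] r N(1) by auto
  have "\<bar>?s (N + k) - r\<bar> / 2 \<le> theta_r r (?s (N + k)) r"
    by (rule theta_r_ge[OF r]) (use s piece_start_le_1[of "N + k"] in auto)
  hence "theta_r r (?s (N + k)) r \<ge> 0" using abs_ge_zero[of "?s (N + k) - r"] by argo
  hence theta: "lam * theta_r r (?s (N + k)) r \<ge> 0" using lam by simp
  have "?s (N + k) - ?s N = r * (1 - piece_start N) * (1 - (1/2)^k)"
    by (simp add: piece_start_def power_add field_simps)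
  moreover have "dist (j (bb(K:=r))) (j (bb(K := ?s N))) = r * (1 - piece_start N) / 2"
    by (rule dist_tip_piece_start[OF sp N(1)])
  ultimately have eq:
    "2 * lam * (1 - (1/2)^k) * dist (j (bb(K:=r))) (j (bb(K := ?s N))) = lam * (?s (N + k) - ?s N)"
    by simp
  have "?g (?s N) + lam * (?s (N + k) - ?s N) \<le> ?g (?s (N + k))"
    by (rule growth_along_piece_starts[OF r N growth])
  moreover have "?g (?s (N + k)) + lam * theta_r r (?s (N + k)) r \<le> ?g r"
    using growth[OF a0 s(2)] by simp
  ultimately show ?thesis using theta eq by linarith
qed

text \<open>Along the spike \<open>u\<close> grows at rate \<open>lam\<close> with respect to arc length, which near the tip
  is twice the distance to the tip: hence the slope at the tip is at least \<open>2 lam\<close>.\<close>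

lemma local_slope_tip_ge:
  fixes u :: "'a \<Rightarrow> real"
  assumes sp: "spike K bb r" and a0: "a0 < r" and lam: "lam > 0"
    and growth: "\<And>a b. a0 \<le> a \<Longrightarrow> a < b \<Longrightarrow> b \<le> r \<Longrightarrow>
      u (j (bb(K:=a))) + lam * theta_r r a b \<le> u (j (bb(K:=b)))"
    and S: "\<And>y. a0 \<le> y \<Longrightarrow> y < r \<Longrightarrow> j (bb(K:=y)) \<in> S"
  shows "ereal (2 * lam) \<le> local_slope S u (j (bb(K:=r)))"
proof (rule dense_le)
  let ?p = "j (bb(K:=r))" and ?s = "\<lambda>i. r * piece_start i"
  have r: "r > 0" using spike_radius_pos[OF sp] .
  obtain N1 where N1: "N1 \<ge> 1" "a0 \<le> ?s N1" using piece_start_exceeds[OF r a0] by blast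
  define X where "X n = j (bb(K := ?s (n + N1)))" for n
  have start: "n + N1 \<ge> 1" "a0 \<le> ?s (n + N1)" for n
  proof -
    have "?s N1 \<le> ?s (n + N1)" using piece_start_mono[of N1 "n + N1"] r by (intro mult_left_mono) auto
    thus "a0 \<le> ?s (n + N1)" using N1(2) by simp
  qed (use N1 in simp)
  have Xin: "X n \<in> S" for n
    using S[OF start(2)] piece_start_le_1[of "n + N1"] r by (simp add: X_def)
  have Xne: "X n \<noteq> ?p" for n
  proof -
    have "r * (1 - piece_start (n + N1)) / 2 > 0" using piece_start_le_1[of "n + N1"] r by simp
    hence "dist ?p (X n) > 0" unfolding X_def by (subst dist_tip_piece_start[OF sp start(1)])
    thus ?thesis by auto
  qed
  fix \<beta> assume \<beta>: "\<beta> < ereal (2 * lam)"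
  obtain k :: nat where k: "\<beta> \<le> ereal (2 * lam * (1 - (1/2)^k))"
  proof (cases \<beta>)
    case (real b)
    hence "(2 * lam - b) / (2 * lam) > 0" using lam \<beta> by simp
    then obtain k :: nat where "(1/2::real)^k < (2 * lam - b) / (2 * lam)"
      using real_arch_pow_inv[of _ "1/2::real"] by auto
    hence "b \<le> 2 * lam * (1 - (1/2)^k)" using lam by (simp add: field_simps)
    thus thesis using that[of k] real by simp
  next
    case MInf thus thesis using that[of 0] by simp
  next
    case PInf thus thesis using \<beta> by simp
  qed
  have "ereal (2 * lam * (1 - (1/2)^k)) \<le> local_slope S u ?p"
    using local_slope_ge[OF piece_start_points_tendsto_tip[OF sp N1(1)] Xin[unfolded X_def]
        Xne[unfolded X_def] tip_gain_ge[OF sp less_imp_le[OF lam] growth start]] .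
  thus "\<beta> \<le> local_slope S u ?p" using k by simp
qed

lemma spike_tips_dense_in_space:
  assumes "\<eta> > 0"
  obtains K bb r where "spike K bb r" "dist (j (bb(K:=r))) z < \<eta>"
proof -
  obtain v where v: "v \<in> P_all" "dist (j v) z < \<eta>/2" using P_all_approx[of "\<eta>/2" z] assms by auto
  then obtain M where "M \<ge> 1" "v \<in> P M" by (auto simp: P_all_def)
  then obtain K bb r where sp: "spike K bb r" and "jdist v (bb(K:=r)) < \<eta>/2"
    using spike_tips_dense[of M v "\<eta>/2"] assms by auto
  hence "dist (j (bb(K:=r))) z < \<eta>"
    using v(2) dist_triangle[of "j (bb(K:=r))" z "j v"] by (simp add: jdist_def dist_commute)
  thus thesis using that sp by blast
qed

lemma slope_at_spike_tip_ge:
  fixes \<Omega> :: "'a set" and u l :: "'a \<Rightarrow> real"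
  assumes sp: "spike K bb r" and \<Omega>: "open \<Omega>" and tip: "j (bb(K:=r)) \<in> \<Omega>"
    and c: "c > 0" and l_ge: "\<And>x. x \<in> \<Omega> \<Longrightarrow> l x \<ge> c"
    and u_cont: "continuous_on (closure \<Omega>) u"
    and slope: "\<forall>x\<in>\<Omega>. local_slope (closure \<Omega>) u x = ereal (l x)"
  shows "l (j (bb(K:=r))) \<ge> 2 * c"
proof (rule ccontr)
  let ?p = "j (bb(K:=r))"
  assume "\<not> l ?p \<ge> 2 * c"
  define lam where "lam = (c + l ?p / 2) / 2"
  have lam: "0 < lam" "lam < c" "l ?p < 2 * lam" using l_ge[OF tip] c \<open>\<not> _\<close> by (auto simp: lam_def)
  have r: "r > 0" using spike_radius_pos[OF sp] .
  obtain e1 where e1: "e1 > 0" "ball ?p e1 \<subseteq> \<Omega>" using \<Omega> tip open_contains_ball by blast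
  obtain e2 where e2: "e2 > 0" "\<forall>x\<in>closure \<Omega>. dist x ?p < e2 \<longrightarrow> dist (u x) (u ?p) < 1"
    using u_cont tip closure_subset unfolding continuous_on_iff by (meson subsetD zero_less_one)
  define d where "d = min e1 e2"
  have d: "d > 0" "ball ?p d \<subseteq> \<Omega>" using e1 e2 by (auto simp: d_def)
  have u_lb: "u z \<ge> u ?p - 1" if "z \<in> ball ?p d" for z
    using that d(2) e2(2) closure_subset[of \<Omega>]
    by (force simp: d_def dist_commute dist_real_def)
  obtain a0 where a0: "0 \<le> a0" "a0 < r" "r - a0 \<le> d/4"
    and near: "\<And>a x. a0 \<le> a \<Longrightarrow> x \<in> descendants K bb a \<Longrightarrow> jdist x (bb(K:=r)) \<le> d/4"
    using descendants_near_tip[OF sp, of "d/4"] d(1) by auto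
  have growth: "u (j (bb(K:=a))) + lam * theta_r r a b \<le> u (j (bb(K:=b)))"
    if "a0 \<le> a" "a < b" "b \<le> r" for a b
    by (rule slope_growth_along_spike[OF sp d(2) u_lb u_cont slope l_ge lam(1,2) near])
       (use that a0 d(1) in auto)
  have "j (bb(K:=y)) \<in> closure \<Omega>" if "a0 \<le> y" "y < r" for y
  proof -
    have "dist ?p (j (bb(K:=y))) = theta_r r y r"
      using jdist_spike[OF sp, of y r] that a0 r by (simp add: jdist_def dist_commute)
    also have "\<dots> \<le> r - y" using theta_r_le[OF r, of y r] that a0 by simp
    finally have "j (bb(K:=y)) \<in> ball ?p d" using that a0 d(1) by simp
    thus ?thesis using d(2) closure_subset by blast
  qed
  hence "ereal (2 * lam) \<le> local_slope (closure \<Omega>) u ?p"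
    by (intro local_slope_tip_ge[OF sp a0(2) lam(1) growth]) auto
  thus False using slope tip lam(3) by simp
qed

end

theorem proposition4p11:
  fixes P :: "nat \<Rightarrow> (nat \<Rightarrow> real) set"
    and \<rho> :: "nat \<Rightarrow> (nat \<Rightarrow> real) \<Rightarrow> (nat \<Rightarrow> real) \<Rightarrow> real"
    and L :: "nat \<Rightarrow> (nat \<Rightarrow> real) set"
    and q :: "nat \<Rightarrow> nat \<Rightarrow> (nat \<Rightarrow> real)"
    and j :: "(nat \<Rightarrow> real) \<Rightarrow> 'a::complete_space"
    and \<Omega> :: "'a set"
    and l g :: "'a \<Rightarrow> real"
  assumes "construction P \<rho> L q"
    and "\<forall>k\<ge>1. \<forall>x\<in>P k. \<forall>y\<in>P k. dist (j x) (j y) = \<rho> k x y"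
    and "closure (j ` (\<Union>k\<in>{1::nat..}. P k)) = UNIV"
    and "open \<Omega>" and "\<Omega> \<noteq> {}" and "\<Omega> \<noteq> UNIV"
    and "continuous_on \<Omega> l" and "bounded (l ` \<Omega>)" and "(INF x\<in>\<Omega>. l x) > 0"
    and "continuous_on (frontier \<Omega>) g"
    and "compat_CC \<Omega> l g"
  shows "\<not> (\<exists>u. continuous_on (closure \<Omega>) u \<and>
               (\<forall>x\<in>\<Omega>. local_slope (closure \<Omega>) u x = ereal (l x)) \<and>
               (\<forall>x\<in>frontier \<Omega>. u x = g x))"
proof
  assume "\<exists>u. continuous_on (closure \<Omega>) u \<and>
               (\<forall>x\<in>\<Omega>. local_slope (closure \<Omega>) u x = ereal (l x)) \<and>
               (\<forall>x\<in>frontier \<Omega>. u x = g x)"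
  then obtain u where u_cont: "continuous_on (closure \<Omega>) u"
    and slope: "\<forall>x\<in>\<Omega>. local_slope (closure \<Omega>) u x = ereal (l x)" by blast
  interpret dense_pinf_construction P \<rho> L q j by unfold_locales (fact assms)+
  define c where "c = (INF x\<in>\<Omega>. l x)"
  have c: "c > 0" using assms(9) by (simp add: c_def)
  have l_ge: "l x \<ge> c" if "x \<in> \<Omega>" for x
    unfolding c_def using bounded_imp_bdd_below[OF assms(8)] that by (rule cINF_lower)
  obtain x0 where x0: "x0 \<in> \<Omega> \<inter> l -` {..<2 * c}"
    using cINF_less_iff[OF assms(5) bounded_imp_bdd_below[OF assms(8)], of "2 * c"] c
    by (auto simp: c_def)
  have "open (\<Omega> \<inter> l -` {..<2 * c})"
    using continuous_open_preimage[OF assms(7,4) open_lessThan] .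
  then obtain e where "e > 0" "ball x0 e \<subseteq> \<Omega> \<inter> l -` {..<2 * c}"
    using x0 open_contains_ball by blast
  moreover obtain K bb r where sp: "spike K bb r" "dist (j (bb(K:=r))) x0 < e"
    using spike_tips_dense_in_space[OF \<open>e > 0\<close>] by blast
  ultimately have "j (bb(K:=r)) \<in> \<Omega>" "l (j (bb(K:=r))) < 2 * c" by (auto simp: dist_commute)
  thus False
    using slope_at_spike_tip_ge[OF sp(1) assms(4) _ c l_ge u_cont slope] by simp
qed

end
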